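(* Let $I$ be an infinite set of positive integers and for $i \in I$ let $G_i$ be a finite group and $H_i \le G_i$ a subgroup, with $|G_i| \to \infty$. Suppose there is a constant $c>0$ with $|H_i| \le (\log|G_i|)^c$ for all $i \in I$. Then the family $(G_i,H_i)_{i \in I}$ is distinguishable if and only if there is a constant $c'>0$ such that, for all sufficiently large $i \in I$, $H_i$ contains a non-identity element $h$ whose conjugacy class $h^{G_i}$ in $G_i$ satisfies $|h^{G_i}| \le (\log|G_i|)^{c'}$.
   Context: For a finite group $G$, let $\mathrm{Irr}(G)$ be its set of complex irreducible characters and $d_\chi=\chi(e)$. For $H \le G$ let $D_H = \frac{1}{|G|}\sum_{\chi \in \mathrm{Irr}(G)} d_\chi \big|\sum_{h \in H, h \neq e}\chi(h)\big|$ (the $L_1$ distance between the distributions $P_H(\chi)=\frac{d_\chi}{|G|}\sum_{h\in H}\chi(h)$ and $P_{\{e\}}$ on $\mathrm{Irr}(G)$ produced by weak quantum Fourier sampling). A family $(G_i,H_i)_{i \in I}$ with $H_i \le G_i$, $I$ an infinite set of positive integers and $|G_i| \to \infty$, is called distinguishable if there is a constant $c''>0$ such that $D_{H_i} \ge (\log|G_i|)^{-c''}$ for all sufficiently large $i \in I$, and indistinguishable otherwise. *)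

theory Defs
  imports "HOL-Algebra.Group" "Jordan_Normal_Form.Matrix" Complex_Main
begin

definition mat_trace :: "complex mat \<Rightarrow> complex" where
  "mat_trace A = (\<Sum>i<dim_row A. A $$ (i, i))"

definition is_rep :: "('a, 'b) monoid_scheme \<Rightarrow> nat \<Rightarrow> ('a \<Rightarrow> complex mat) \<Rightarrow> bool" where
  "is_rep G n \<rho> \<longleftrightarrow> n \<ge> 1 \<and>
     (\<forall>g \<in> carrier G. \<rho> g \<in> carrier_mat n n) \<and>
     \<rho> \<one>\<^bsub>G\<^esub> = 1\<^sub>m n \<and>
     (\<forall>g \<in> carrier G. \<forall>h \<in> carrier G. \<rho> (g \<otimes>\<^bsub>G\<^esub> h) = \<rho> g * \<rho> h)"

definition is_subspace :: "nat \<Rightarrow> complex vec set \<Rightarrow> bool" where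
  "is_subspace n W \<longleftrightarrow> W \<subseteq> carrier_vec n \<and> 0\<^sub>v n \<in> W \<and>
     (\<forall>v \<in> W. \<forall>w \<in> W. v + w \<in> W) \<and> (\<forall>c. \<forall>v \<in> W. c \<cdot>\<^sub>v v \<in> W)"

definition is_irr_rep :: "('a, 'b) monoid_scheme \<Rightarrow> nat \<Rightarrow> ('a \<Rightarrow> complex mat) \<Rightarrow> bool" where
  "is_irr_rep G n \<rho> \<longleftrightarrow> is_rep G n \<rho> \<and>
     (\<forall>W. is_subspace n W \<and> (\<forall>g \<in> carrier G. \<forall>v \<in> W. \<rho> g *\<^sub>v v \<in> W)
          \<longrightarrow> W = {0\<^sub>v n} \<or> W = carrier_vec n)"

definition character :: "('a, 'b) monoid_scheme \<Rightarrow> ('a \<Rightarrow> complex mat) \<Rightarrow> 'a \<Rightarrow> complex" where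
  "character G \<rho> = (\<lambda>g. if g \<in> carrier G then mat_trace (\<rho> g) else 0)"

text \<open>Irr(G): the set of complex irreducible characters (isomorphic representations give
  the same function, so each irreducible character appears once).\<close>
definition Irr :: "('a, 'b) monoid_scheme \<Rightarrow> ('a \<Rightarrow> complex) set" where
  "Irr G = {character G \<rho> | n \<rho>. is_irr_rep G n \<rho>}"

definition D_H :: "('a, 'b) monoid_scheme \<Rightarrow> 'a set \<Rightarrow> real" where
  "D_H G H = (1 / real (card (carrier G))) *
     (\<Sum>\<chi> \<in> Irr G. cmod (\<chi> \<one>\<^bsub>G\<^esub>) * cmod (\<Sum>h \<in> H - {\<one>\<^bsub>G\<^esub>}. \<chi> h))"

text \<open>Distinguishable family (indices in I, "for all sufficiently large i in I").
  Natural logarithm is used; the choice of base is immaterial.\<close>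
definition distinguishable :: "nat set \<Rightarrow> (nat \<Rightarrow> ('a, 'b) monoid_scheme) \<Rightarrow> (nat \<Rightarrow> 'a set) \<Rightarrow> bool" where
  "distinguishable I G H \<longleftrightarrow>
     (\<exists>c''>0. \<exists>N. \<forall>i \<in> I. i \<ge> N \<longrightarrow>
        D_H (G i) (H i) \<ge> (ln (real (card (carrier (G i))))) powr (- c''))"

definition conj_class :: "('a, 'b) monoid_scheme \<Rightarrow> 'a \<Rightarrow> 'a set" where
  "conj_class G h = {g \<otimes>\<^bsub>G\<^esub> h \<otimes>\<^bsub>G\<^esub> inv\<^bsub>G\<^esub> g | g. g \<in> carrier G}"

end

theory Submission
  imports Defs "Jordan_Normal_Form.Schur_Decomposition" "HOL-Algebra.Multiplicative_Group"
begin

text \<open>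
  Everything rests on column orthogonality of the character table: for \<open>h\<^sub>0, h \<in> G\<close> the sum
  \<open>\<Sum>\<chi>. cnj (\<chi> h\<^sub>0) * \<chi> h\<close> is \<open>|G| / |h\<^sub>0^G|\<close> if \<open>h\<close> is conjugate to \<open>h\<^sub>0\<close>, and \<open>0\<close> otherwise.

  Pairing the inner sums of \<open>D_H\<close> with \<open>cnj (\<chi> h\<^sub>0)\<close> for one \<open>h\<^sub>0 \<in> H - {e}\<close> and using
  \<open>|\<chi> h\<^sub>0| \<le> d\<^sub>\<chi>\<close> gives \<open>D_H \<ge> 1 / |h\<^sub>0^G|\<close>, so one small class in \<open>H\<close> makes \<open>D_H\<close> large.
  Conversely, \<open>\<Sum>\<chi>. d\<^sub>\<chi>\<^sup>2 = |G|\<close>, \<open>\<Sum>\<chi>. |\<chi> h|\<^sup>2 = |G| / |h^G|\<close> and AM-GM give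
  \<open>D_H \<le> \<Sum>h \<in> H - {e}. |h^G|^(-1/2)\<close>, which is below \<open>(log |G|)^(-c'')\<close> as soon as
  \<open>|H| \<le> (log |G|)^c\<close> and all these classes are larger than \<open>(log |G|)^(2(c + c''))\<close>.

  Column orthogonality is derived from scratch: Schur's lemma and averaging of intertwiners give
  row orthogonality, and completeness of the irreducible characters among class functions comes
  from the regular representation, because the trace of every representation is a sum of traces
  of irreducible ones.
\<close>

section \<open>Matrices\<close>

lemma index_mult_mat_sum:
  assumes "A \<in> carrier_mat n m" "B \<in> carrier_mat m p" "i < n" "j < p"
  shows "(A * B) $$ (i,j) = (\<Sum>l<m. A $$ (i,l) * B $$ (l,j))"
  using assms by (auto simp: scalar_prod_def lessThan_atLeast0 intro!: sum.cong)

lemma index_mult_mat_vec_sum: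
  assumes "A \<in> carrier_mat n m" "v \<in> carrier_vec m" "i < n"
  shows "(A *\<^sub>v v) $ i = (\<Sum>l<m. A $$ (i,l) * v $ l)"
  using assms by (auto simp: scalar_prod_def lessThan_atLeast0 intro!: sum.cong)

lemma index_mult_mat_unit_vec:
  fixes T :: "'a::semiring_1 mat"
  assumes T: "T \<in> carrier_mat n m" and j: "j < m" and i: "i < n"
  shows "(T *\<^sub>v unit_vec m j) $ i = T $$ (i,j)"
proof -
  have "(T *\<^sub>v unit_vec m j) $ i = (\<Sum>l<m. T $$ (i,l) * unit_vec m j $ l)"
    by (rule index_mult_mat_vec_sum[OF T _ i]) simp
  also have "\<dots> = (\<Sum>l<m. if l = j then T $$ (i,l) else 0)"
    by (rule sum.cong) (auto simp: unit_vec_def)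
  also have "\<dots> = T $$ (i,j)" using j by simp
  finally show ?thesis .
qed

lemma mult_mat_unit_vec:
  fixes P :: "'a::semiring_1 mat"
  assumes P: "P \<in> carrier_mat n m" and j: "j < m"
  shows "P *\<^sub>v unit_vec m j = col P j"
  using P j index_mult_mat_unit_vec[OF P j] by (auto intro!: eq_vecI)

lemma mult_mat_vec_zero_cols: "A \<in> carrier_mat n 0 \<Longrightarrow> c \<in> carrier_vec 0 \<Longrightarrow> A *\<^sub>v c = 0\<^sub>v n"
  by (auto intro!: eq_vecI simp: scalar_prod_def)

lemma sum_lessThan_split:
  fixes f :: "nat \<Rightarrow> 'c::comm_monoid_add"
  assumes "k \<le> n"
  shows "(\<Sum>l<n. f l) = (\<Sum>l<k. f l) + (\<Sum>l<n - k. f (l + k))"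
proof -
  have "(\<Sum>l<k + d. f l) = (\<Sum>l<k. f l) + (\<Sum>l<d. f (l + k))" for d
    by (induction d) (auto simp: add.commute add.left_commute)
  from this[of "n - k"] show ?thesis using assms by simp
qed

lemma mult_conj_mat:
  fixes P Q A C :: "'a::semiring_1 mat"
  assumes P: "P \<in> carrier_mat n n" and Q: "Q \<in> carrier_mat n n" and A: "A \<in> carrier_mat n n"
    and C: "C \<in> carrier_mat n n" and PQ: "P * Q = 1\<^sub>m n"
  shows "(Q * A * P) * (Q * C * P) = Q * (A * C) * P"
proof -
  have "(Q * A * P) * (Q * C * P) = Q * (A * ((P * Q) * (C * P)))"
    using P Q A C by (simp add: assoc_mult_mat[of _ n n _ n _ n])
  also have "\<dots> = Q * (A * C) * P"
    using P Q A C PQ by (simp add: assoc_mult_mat[of _ n n _ n _ n])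
  finally show ?thesis .
qed

lemma assoc_mult_mat4:
  assumes "A \<in> carrier_mat n1 n2" "B \<in> carrier_mat n2 n3" "C \<in> carrier_mat n3 n4" "D \<in> carrier_mat n4 n5"
  shows "A * (B * C * D) = A * B * C * D" "A * B * C * D = A * (B * C) * D"
proof -
  have "A * (B * C * D) = (A * (B * C)) * D"
    by (rule assoc_mult_mat[symmetric]) (use assms in auto)
  also have "A * (B * C) = A * B * C" by (rule assoc_mult_mat[symmetric]) (use assms in auto)
  finally show "A * (B * C * D) = A * B * C * D" .
  show "A * B * C * D = A * (B * C) * D" using assoc_mult_mat[OF assms(1-3)] by simp
qed

lemma mat_trace_mult_comm:
  assumes "A \<in> carrier_mat n m" "B \<in> carrier_mat m n"
  shows "mat_trace (A * B) = mat_trace (B * A)"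
proof -
  have "mat_trace (A * B) = (\<Sum>i<n. \<Sum>l<m. A $$ (i,l) * B $$ (l,i))"
    unfolding mat_trace_def using assms by (auto simp: scalar_prod_def lessThan_atLeast0 intro!: sum.cong)
  also have "\<dots> = (\<Sum>l<m. \<Sum>i<n. B $$ (l,i) * A $$ (i,l))"
    by (subst sum.swap) (simp add: mult.commute)
  also have "\<dots> = mat_trace (B * A)"
    unfolding mat_trace_def using assms by (auto simp: scalar_prod_def lessThan_atLeast0 intro!: sum.cong)
  finally show ?thesis .
qed

lemma mat_trace_one [simp]: "mat_trace (1\<^sub>m n) = of_nat n"
  unfolding mat_trace_def by simp

lemma mat_trace_smult: "A \<in> carrier_mat n n \<Longrightarrow> mat_trace (a \<cdot>\<^sub>m A) = a * mat_trace A"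
  unfolding mat_trace_def by (simp add: sum_distrib_left)

lemma mat_trace_similar:
  assumes "A \<in> carrier_mat n n" "P \<in> carrier_mat n n" "Q \<in> carrier_mat n n" "Q * P = 1\<^sub>m n"
  shows "mat_trace (P * A * Q) = mat_trace A"
proof -
  have "mat_trace (P * A * Q) = mat_trace (Q * (P * A))"
    using assms by (intro mat_trace_mult_comm[of _ n n]) auto
  also have "Q * (P * A) = (Q * P) * A"
    using assms by (simp add: assoc_mult_mat[of Q n n P n A n, symmetric])
  finally show ?thesis using assms by simp
qed

lemma upper_triangular_mult:
  assumes X: "X \<in> carrier_mat n n" and Y: "Y \<in> carrier_mat n n"
    and ux: "upper_triangular X" and uy: "upper_triangular Y"
  shows "upper_triangular (X * Y)" "\<And>i. i < n \<Longrightarrow> (X * Y) $$ (i,i) = X $$ (i,i) * Y $$ (i,i)"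
proof -
  have vanish: "X $$ (i,l) * Y $$ (l,j) = 0" if "l < i \<or> j < l" "i < n" "l < n" for i j l
    using that X Y upper_triangularD[OF ux, of l i] upper_triangularD[OF uy, of j l] by auto
  show "upper_triangular (X * Y)"
  proof
    fix i j assume ji: "j < i" and i: "i < dim_row (X * Y)"
    have "(X * Y) $$ (i,j) = (\<Sum>l<n. X $$ (i,l) * Y $$ (l,j))"
      using index_mult_mat_sum[OF X Y] ji i X by simp
    also have "\<dots> = 0"
    proof (rule sum.neutral, intro ballI)
      fix l assume "l \<in> {..<n}"
      thus "X $$ (i,l) * Y $$ (l,j) = 0" using vanish[of l i j] ji i X by fastforce
    qed
    finally show "(X * Y) $$ (i,j) = 0" .
  qed
  fix i assume i: "i < n"
  have "(X * Y) $$ (i,i) = (\<Sum>l<n. X $$ (i,l) * Y $$ (l,i))"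
    using index_mult_mat_sum[OF X Y i i] .
  also have "\<dots> = (\<Sum>l\<in>{i}. X $$ (i,l) * Y $$ (l,i))"
    using vanish i by (intro sum.mono_neutral_right) (auto simp: nat_neq_iff)
  finally show "(X * Y) $$ (i,i) = X $$ (i,i) * Y $$ (i,i)" by simp
qed

lemma upper_triangular_pow_mat:
  assumes B: "B \<in> carrier_mat n n" and u: "upper_triangular B"
  shows "upper_triangular (B ^\<^sub>m k) \<and> (\<forall>i<n. (B ^\<^sub>m k) $$ (i,i) = (B $$ (i,i)) ^ k)"
proof (induction k)
  case 0 thus ?case using B by auto
next
  case (Suc k)
  have "B ^\<^sub>m k \<in> carrier_mat n n" using B by simp
  thus ?case using upper_triangular_mult[OF _ B _ u] Suc.IH by (auto simp del: power_Suc simp: power_Suc2)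
qed

lemma mat_trace_pow_mat_eigenvalues:
  fixes A :: "complex mat"
  assumes A: "A \<in> carrier_mat n n"
  obtains es where "length es = n" "\<And>e. e \<in> set es \<Longrightarrow> eigenvalue A e"
    "\<And>k. mat_trace (A ^\<^sub>m k) = (\<Sum>i<n. (es ! i) ^ k)"
proof -
  obtain es where cp: "char_poly A = (\<Prod>a\<leftarrow>es. [:- a, 1:])" and len: "length es = n"
    using char_poly_factorized[OF A] by blast
  obtain B P Q where sd: "schur_decomposition A es = (B,P,Q)" by (cases "schur_decomposition A es") auto
  from schur_decomposition[OF A cp sd] have wit: "similar_mat_wit A B P Q"
    and ut: "upper_triangular B" and dg: "diag_mat B = es" by auto
  note W = similar_mat_witD2[OF A wit]
  have B: "B \<in> carrier_mat n n" using W by auto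
  have esi: "i < n \<Longrightarrow> es ! i = B $$ (i,i)" for i using dg B unfolding diag_mat_def by auto
  have "mat_trace (A ^\<^sub>m k) = (\<Sum>i<n. (es ! i) ^ k)" for k
  proof -
    have "mat_trace (A ^\<^sub>m k) = mat_trace (P * B ^\<^sub>m k * Q)"
      using similar_mat_wit_pow_id[OF wit] by simp
    also have "\<dots> = mat_trace (B ^\<^sub>m k)"
      using mat_trace_similar[of "B ^\<^sub>m k" n P Q] W B by simp
    finally show ?thesis
      unfolding mat_trace_def using upper_triangular_pow_mat[OF B ut, of k] B esi by simp
  qed
  moreover have "eigenvalue A e" if "e \<in> set es" for e
    using that eigenvalue_root_char_poly[OF A] unfolding cp by (auto simp: poly_prod_list prod_list_zero_iff o_def)
  ultimately show thesis using that len by blast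
qed

lemma eigenvalue_of_finite_order:
  fixes A :: "complex mat"
  assumes A: "A \<in> carrier_mat n n" and AN: "A ^\<^sub>m N = 1\<^sub>m n" and e: "eigenvalue A e"
  shows "e ^ N = 1"
proof -
  obtain v where v: "v \<in> carrier_vec n" "v \<noteq> 0\<^sub>v n" "A *\<^sub>v v = e \<cdot>\<^sub>v v"
    using e A unfolding eigenvalue_def eigenvector_def by auto
  have pow: "A ^\<^sub>m k *\<^sub>v v = e ^ k \<cdot>\<^sub>v v" for k
  proof (induction k)
    case (Suc k)
    have "A ^\<^sub>m Suc k *\<^sub>v v = A ^\<^sub>m k *\<^sub>v (A *\<^sub>v v)"
      using A v by (simp add: assoc_mult_mat_vec[of _ n n _ n])
    also have "\<dots> = e \<cdot>\<^sub>v (e ^ k \<cdot>\<^sub>v v)"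
      using v A Suc.IH by (simp add: mult_mat_vec[of "A ^\<^sub>m k" n n])
    finally show ?case by (simp add: smult_smult_assoc)
  qed (use v A in simp)
  obtain i where i: "i < n" "v $ i \<noteq> 0"
  proof (rule ccontr)
    assume "\<not> thesis"
    hence "v = 0\<^sub>v n" using that v(1) by (intro eq_vecI) auto
    thus False using v(2) by simp
  qed
  have "v = e ^ N \<cdot>\<^sub>v v" using pow[of N] AN v(1) by simp
  hence "v $ i = e ^ N * v $ i" using i v(1) by (metis carrier_vecD index_smult_vec(1))
  thus ?thesis using i by simp
qed

lemma mat_trace_of_finite_order:
  fixes A :: "complex mat"
  assumes A: "A \<in> carrier_mat n n" and AN: "A ^\<^sub>m N = 1\<^sub>m n" and N: "N > 0"
  shows "mat_trace (A ^\<^sub>m (N - 1)) = cnj (mat_trace A)" "cmod (mat_trace A) \<le> n"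
proof -
  obtain es where len: "length es = n" and eig: "\<And>e. e \<in> set es \<Longrightarrow> eigenvalue A e"
    and tr: "\<And>k. mat_trace (A ^\<^sub>m k) = (\<Sum>i<n. (es ! i) ^ k)"
    using mat_trace_pow_mat_eigenvalues[OF A] by blast
  have eN: "e ^ N = 1" if "e \<in> set es" for e
    using eigenvalue_of_finite_order[OF A AN eig[OF that]] .
  have norm1: "cmod e = 1" if "e \<in> set es" for e
  proof -
    have "cmod e ^ N = 1" using eN[OF that] by (metis norm_one norm_power)
    thus ?thesis using N power_eq_imp_eq_base[of "cmod e" N 1] by simp
  qed
  have inv: "e ^ (N - 1) = cnj e" if "e \<in> set es" for e
  proof -
    have "e \<noteq> 0" using norm1[OF that] by auto
    moreover have "e ^ (N - 1) * e = 1" using eN[OF that] N by (metis Suc_diff_1 power_Suc2)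
    moreover have "cnj e * e = 1"
      using norm1[OF that] by (metis complex_norm_square mult.commute of_real_1 power_one)
    ultimately show ?thesis by (metis mult_right_cancel)
  qed
  show "mat_trace (A ^\<^sub>m (N - 1)) = cnj (mat_trace A)"
    using tr[of "N - 1"] tr[of 1] inv len by (simp add: cnj_sum)
  have "cmod (mat_trace A) \<le> (\<Sum>i<n. cmod (es ! i))" using tr[of 1] norm_sum by simp
  also have "\<dots> = n" using norm1 len by simp
  finally show "cmod (mat_trace A) \<le> n" .
qed

definition lin_indpt_cols :: "nat \<Rightarrow> nat \<Rightarrow> complex mat \<Rightarrow> bool" where
  "lin_indpt_cols n m A \<longleftrightarrow> (\<forall>c\<in>carrier_vec m. A *\<^sub>v c = 0\<^sub>v n \<longrightarrow> c = 0\<^sub>v m)"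

definition append_col :: "complex mat \<Rightarrow> complex vec \<Rightarrow> complex mat" where
  "append_col A w = mat (dim_row A) (Suc (dim_col A)) (\<lambda>(i,j). if j < dim_col A then A $$ (i,j) else w $ i)"

lemma lin_indpt_cols_le:
  assumes A: "A \<in> carrier_mat n m" and li: "lin_indpt_cols n m A"
  shows "m \<le> n"
proof (rule ccontr)
  assume "\<not> m \<le> n" hence nm: "n < m" by simp
  define c where "c = (\<lambda>i. vec m (\<lambda>j. if i < n then A $$ (i,j) else (0::complex)))"
  define A' where "A' = mat\<^sub>r m m (\<lambda>i. if i = n then 0\<^sub>v m else c i)"
  have "det A' = 0" unfolding A'_def by (rule det_row_0[OF nm]) (auto simp: c_def)
  then obtain v where v: "v \<in> carrier_vec m" "v \<noteq> 0\<^sub>v m" "A' *\<^sub>v v = 0\<^sub>v m"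
    using det_0_iff_vec_prod_zero[of A' m] unfolding A'_def by auto
  have "A *\<^sub>v v = 0\<^sub>v n"
  proof (rule eq_vecI)
    fix i assume "i < dim_vec (0\<^sub>v n :: complex vec)"
    hence i: "i < n" by simp
    have "(A' *\<^sub>v v) $ i = 0" using v(3) i nm by simp
    moreover have "(A' *\<^sub>v v) $ i = row A' i \<bullet> v" using i nm unfolding A'_def by simp
    moreover have "row A' i = c i" using i nm unfolding A'_def by (simp add: c_def)
    moreover have "c i \<bullet> v = (A *\<^sub>v v) $ i"
      using i A v(1) unfolding c_def by (simp add: scalar_prod_def)
    ultimately show "(A *\<^sub>v v) $ i = 0\<^sub>v n $ i" using i by simp
  qed (use A in simp)
  thus False using li v unfolding lin_indpt_cols_def by blast
qed

lemma append_col_carrier[simp]: "A \<in> carrier_mat n m \<Longrightarrow> append_col A w \<in> carrier_mat n (Suc m)"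
  unfolding append_col_def by auto

lemma index_append_col_mult_vec:
  assumes A: "A \<in> carrier_mat n m" and c: "c \<in> carrier_vec (Suc m)" and i: "i < n"
  shows "(append_col A w *\<^sub>v c) $ i = (\<Sum>l<m. A $$ (i,l) * c $ l) + w $ i * c $ m"
proof -
  have "(append_col A w *\<^sub>v c) $ i = (\<Sum>l<Suc m. append_col A w $$ (i,l) * c $ l)"
    using index_mult_mat_vec_sum[OF append_col_carrier[OF A] c i] .
  also have "\<dots> = (\<Sum>l<m. A $$ (i,l) * c $ l) + w $ i * c $ m"
    using A i by (simp add: append_col_def)
  finally show ?thesis .
qed

lemma col_append_col: assumes A: "A \<in> carrier_mat n m" and w: "w \<in> carrier_vec n"
  shows "j < m \<Longrightarrow> col (append_col A w) j = col A j" "col (append_col A w) m = w"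
  using A w by (auto simp: append_col_def intro!: eq_vecI)

lemma lin_indpt_cols_append_col:
  assumes A: "A \<in> carrier_mat n m" and li: "lin_indpt_cols n m A" and w: "w \<in> carrier_vec n"
    and nsp: "\<not> (\<exists>c\<in>carrier_vec m. w = A *\<^sub>v c)"
  shows "lin_indpt_cols n (Suc m) (append_col A w)"
  unfolding lin_indpt_cols_def
proof (intro ballI impI)
  fix c :: "complex vec" assume c: "c \<in> carrier_vec (Suc m)" and z: "append_col A w *\<^sub>v c = 0\<^sub>v n"
  have eq: "(\<Sum>l<m. A $$ (i,l) * c $ l) + w $ i * c $ m = 0" if i: "i < n" for i
  proof -
    have "(append_col A w *\<^sub>v c) $ i = 0" using z i by simp
    thus ?thesis using index_append_col_mult_vec[OF A c i] by simp
  qed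
  have cm: "c $ m = 0"
  proof (rule ccontr)
    assume ne: "c $ m \<noteq> 0"
    define d where "d = vec m (\<lambda>l. - c $ l / c $ m)"
    have "w = A *\<^sub>v d"
    proof (rule eq_vecI)
      fix i assume "i < dim_vec (A *\<^sub>v d)" hence i: "i < n" using A by simp
      have "(A *\<^sub>v d) $ i = (\<Sum>l<m. A $$ (i,l) * d $ l)"
        using index_mult_mat_vec_sum[OF A _ i, of d] by (simp add: d_def)
      also have "\<dots> = - (\<Sum>l<m. A $$ (i,l) * c $ l) / c $ m"
        unfolding d_def by (simp add: sum_divide_distrib sum_negf)
      also have "\<dots> = w $ i" using eq[OF i] ne by (simp add: field_simps add_eq_0_iff)
      finally show "w $ i = (A *\<^sub>v d) $ i" by simp
    qed (use A w in simp)
    moreover have "d \<in> carrier_vec m" by (simp add: d_def)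
    ultimately show False using nsp by blast
  qed
  define c0 where "c0 = vec m (\<lambda>l. c $ l)"
  have "A *\<^sub>v c0 = 0\<^sub>v n"
  proof (rule eq_vecI)
    fix i assume "i < dim_vec (0\<^sub>v n :: complex vec)" hence i: "i < n" by simp
    have "(A *\<^sub>v c0) $ i = (\<Sum>l<m. A $$ (i,l) * c $ l)"
      using index_mult_mat_vec_sum[OF A _ i, of c0] by (simp add: c0_def)
    thus "(A *\<^sub>v c0) $ i = 0\<^sub>v n $ i" using eq[OF i] cm i by simp
  qed (use A in simp)
  hence "c0 = 0\<^sub>v m" using li unfolding lin_indpt_cols_def c0_def by auto
  hence "\<forall>l<m. c $ l = 0" unfolding c0_def by (metis index_vec index_zero_vec(1))
  thus "c = 0\<^sub>v (Suc m)" using cm c by (intro eq_vecI) (auto simp: less_Suc_eq)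
qed

lemma extend_lin_indpt_cols_spanning:
  assumes S: "S \<subseteq> carrier_vec n" and L: "L \<in> carrier_mat n k" and liL: "lin_indpt_cols n k L"
    and LS: "\<forall>j<k. col L j \<in> S"
  shows "\<exists>m B. B \<in> carrier_mat n m \<and> lin_indpt_cols n m B \<and> k \<le> m \<and>
     (\<forall>i<n. \<forall>j<k. B $$ (i,j) = L $$ (i,j)) \<and> (\<forall>j<m. col B j \<in> S) \<and>
     (\<forall>w\<in>S. \<exists>c\<in>carrier_vec m. w = B *\<^sub>v c)"
proof -
  define P where "P = (\<lambda>m. \<exists>B. B \<in> carrier_mat n m \<and> lin_indpt_cols n m B \<and> k \<le> m \<and>
     (\<forall>i<n. \<forall>j<k. B $$ (i,j) = L $$ (i,j)) \<and> (\<forall>j<m. col B j \<in> S))"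
  have Pk: "P k" unfolding P_def using L liL LS by blast
  have bnd: "\<forall>y. P y \<longrightarrow> id y < Suc n"
  proof (intro allI impI)
    fix y assume "P y"
    then obtain B where "B \<in> carrier_mat n y" "lin_indpt_cols n y B" unfolding P_def by blast
    thus "id y < Suc n" using lin_indpt_cols_le by force
  qed
  obtain m where Pm: "P m" and mx: "\<forall>y. P y \<longrightarrow> y \<le> m"
    using ex_has_greatest_nat[OF Pk bnd] by auto
  then obtain B where B: "B \<in> carrier_mat n m" "lin_indpt_cols n m B" "k \<le> m"
    "\<forall>i<n. \<forall>j<k. B $$ (i,j) = L $$ (i,j)" "\<forall>j<m. col B j \<in> S" unfolding P_def by blast
  have "\<forall>w\<in>S. \<exists>c\<in>carrier_vec m. w = B *\<^sub>v c"
  proof (rule ccontr)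
    assume "\<not> ?thesis"
    then obtain w where w: "w \<in> S" and nsp: "\<not> (\<exists>c\<in>carrier_vec m. w = B *\<^sub>v c)" by blast
    have wc: "w \<in> carrier_vec n" using w S by auto
    have "P (Suc m)" unfolding P_def
    proof (intro exI conjI)
      show "append_col B w \<in> carrier_mat n (Suc m)" using B by simp
      show "lin_indpt_cols n (Suc m) (append_col B w)" by (rule lin_indpt_cols_append_col[OF B(1) B(2) wc nsp])
      show "k \<le> Suc m" using B by simp
      show "\<forall>i<n. \<forall>j<k. append_col B w $$ (i, j) = L $$ (i, j)"
        using B by (auto simp: append_col_def)
      show "\<forall>j<Suc m. col (append_col B w) j \<in> S"
        using B w col_append_col[OF B(1) wc] by (auto simp: less_Suc_eq)
    qed
    thus False using mx by force
  qed
  thus ?thesis using B by blast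
qed

lemma spanning_cols_right_inverse:
  fixes B :: "complex mat"
  assumes B: "B \<in> carrier_mat n m" and sp: "\<forall>w\<in>carrier_vec n. \<exists>c\<in>carrier_vec m. w = B *\<^sub>v c"
  shows "\<exists>C\<in>carrier_mat m n. B * C = 1\<^sub>m n"
proof -
  have "\<forall>j. \<exists>c. j < n \<longrightarrow> c \<in> carrier_vec m \<and> unit_vec n j = B *\<^sub>v c"
  proof
    fix j show "\<exists>c. j < n \<longrightarrow> c \<in> carrier_vec m \<and> unit_vec n j = B *\<^sub>v c"
      using sp unit_vec_carrier[of n j] by blast
  qed
  from choice[OF this] obtain cs where cs0: "\<forall>j. j < n \<longrightarrow> cs j \<in> carrier_vec m \<and> unit_vec n j = B *\<^sub>v cs j"
    by blast
  hence cs: "\<And>j. j < n \<Longrightarrow> cs j \<in> carrier_vec m \<and> unit_vec n j = B *\<^sub>v cs j" by blast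
  define C where "C = mat m n (\<lambda>(i,j). cs j $ i)"
  have "B * C = 1\<^sub>m n"
  proof (rule eq_matI)
    fix i j assume i: "i < dim_row (1\<^sub>m n :: complex mat)" and j: "j < dim_col (1\<^sub>m n :: complex mat)"
    hence i: "i < n" and j: "j < n" by auto
    have Cc: "C \<in> carrier_mat m n" by (simp add: C_def)
    have "(B * C) $$ (i,j) = (\<Sum>l<m. B $$ (i,l) * C $$ (l,j))"
      using index_mult_mat_sum[OF B Cc i j] .
    also have "\<dots> = (\<Sum>l<m. B $$ (i,l) * cs j $ l)"
      by (rule sum.cong) (auto simp: C_def j)
    also have "\<dots> = (B *\<^sub>v cs j) $ i" using index_mult_mat_vec_sum[OF B _ i, of "cs j"] cs[OF j] by simp
    also have "\<dots> = unit_vec n j $ i" using cs[OF j] by simp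
    finally show "(B * C) $$ (i,j) = 1\<^sub>m n $$ (i,j)" using i j by simp
  qed (use B in \<open>auto simp: C_def\<close>)
  thus ?thesis by (intro bexI[of _ C]) (auto simp: C_def)
qed

lemma spanning_cols_ge:
  fixes B :: "complex mat"
  assumes B: "B \<in> carrier_mat n m" and sp: "\<forall>w\<in>carrier_vec n. \<exists>c\<in>carrier_vec m. w = B *\<^sub>v c"
  shows "n \<le> m"
proof -
  obtain C where C: "C \<in> carrier_mat m n" and BC: "B * C = 1\<^sub>m n" using spanning_cols_right_inverse[OF B sp] by blast
  have "lin_indpt_cols m n C" unfolding lin_indpt_cols_def
  proof (intro ballI impI)
    fix v :: "complex vec" assume v: "v \<in> carrier_vec n" and z: "C *\<^sub>v v = 0\<^sub>v m"
    have "v = (B * C) *\<^sub>v v" using BC v by simp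
    also have "\<dots> = B *\<^sub>v (C *\<^sub>v v)" using B C v by simp
    also have "\<dots> = 0\<^sub>v n" using z B by (auto intro!: eq_vecI simp: scalar_prod_def)
    finally show "v = 0\<^sub>v n" .
  qed
  thus ?thesis using lin_indpt_cols_le[OF C] by simp
qed

lemma subspace_mult_mat_vec_closed:
  assumes W: "is_subspace n W"
  shows "A \<in> carrier_mat n m \<Longrightarrow> \<forall>j<m. col A j \<in> W \<Longrightarrow> c \<in> carrier_vec m \<Longrightarrow> A *\<^sub>v c \<in> W"
proof (induction m arbitrary: A c)
  case 0
  thus ?case using W mult_mat_vec_zero_cols[OF 0(1) 0(3)] unfolding is_subspace_def by simp
next
  case (Suc m)
  define A' where "A' = mat n m (\<lambda>(i,j). A $$ (i,j))"
  define c' where "c' = vec m (\<lambda>i. c $ i)"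
  have A': "A' \<in> carrier_mat n m" and c': "c' \<in> carrier_vec m" by (auto simp: A'_def c'_def)
  have colA': "\<forall>j<m. col A' j \<in> W"
  proof (intro allI impI)
    fix j assume j: "j < m"
    have "col A' j = col A j" using Suc.prems(1) j by (auto simp: A'_def intro!: eq_vecI)
    thus "col A' j \<in> W" using Suc.prems(2) j by simp
  qed
  have IH: "A' *\<^sub>v c' \<in> W" by (rule Suc.IH[OF A' colA' c'])
  have cm: "col A m \<in> W" using Suc.prems(2) by simp
  have eq: "A *\<^sub>v c = A' *\<^sub>v c' + (c $ m) \<cdot>\<^sub>v col A m"
  proof (rule eq_vecI)
    fix i assume "i < dim_vec (A' *\<^sub>v c' + (c $ m) \<cdot>\<^sub>v col A m)"
    hence i: "i < n" using A' Suc.prems(1) by simp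
    have "(A *\<^sub>v c) $ i = (\<Sum>l<Suc m. A $$ (i,l) * c $ l)" by (rule index_mult_mat_vec_sum[OF Suc.prems(1) Suc.prems(3) i])
    also have "\<dots> = (\<Sum>l<m. A' $$ (i,l) * c' $ l) + c $ m * A $$ (i,m)"
      using i by (simp add: A'_def c'_def)
    also have "(\<Sum>l<m. A' $$ (i,l) * c' $ l) = (A' *\<^sub>v c') $ i" by (rule index_mult_mat_vec_sum[OF A' c' i, symmetric])
    finally show "(A *\<^sub>v c) $ i = (A' *\<^sub>v c' + (c $ m) \<cdot>\<^sub>v col A m) $ i"
      using i A' Suc.prems(1) by simp
  qed (use A' Suc.prems(1) in simp)
  show ?case unfolding eq using W IH cm unfolding is_subspace_def by blast
qed

lemma mult_mat_vec_zero_extend: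
  assumes B: "B \<in> carrier_mat n m" and B1: "B1 \<in> carrier_mat n k" and k: "k \<le> m"
    and agree: "\<forall>i<n. \<forall>j<k. B $$ (i,j) = B1 $$ (i,j)" and c: "c \<in> carrier_vec k"
  shows "B *\<^sub>v vec m (\<lambda>i. if i < k then c $ i else 0) = B1 *\<^sub>v c"
proof (rule eq_vecI)
  fix i assume "i < dim_vec (B1 *\<^sub>v c)" hence i: "i < n" using B1 by simp
  have "(B *\<^sub>v vec m (\<lambda>i. if i < k then c $ i else 0)) $ i
      = (\<Sum>l<m. B $$ (i,l) * (if l < k then c $ l else 0))"
    using index_mult_mat_vec_sum[OF B _ i] by simp
  also have "\<dots> = (\<Sum>l<k. B $$ (i,l) * c $ l)"
    by (rule sum.mono_neutral_cong_right) (use k in auto)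
  also have "\<dots> = (\<Sum>l<k. B1 $$ (i,l) * c $ l)"
    by (rule sum.cong) (use agree i in auto)
  also have "\<dots> = (B1 *\<^sub>v c) $ i"
    by (rule index_mult_mat_vec_sum[OF B1 c i, symmetric])
  finally show "(B *\<^sub>v vec m (\<lambda>i. if i < k then c $ i else 0)) $ i = (B1 *\<^sub>v c) $ i" .
qed (use B B1 in simp)

lemma subspace_adapted_basis:
  assumes W: "is_subspace n W" and W0: "W \<noteq> {0\<^sub>v n}" and Wn: "W \<noteq> carrier_vec n"
  obtains k P Q where "0 < k" "k < n" "P \<in> carrier_mat n n" "Q \<in> carrier_mat n n"
    "Q * P = 1\<^sub>m n" "P * Q = 1\<^sub>m n" "\<forall>j<k. col P j \<in> W"
    "\<forall>w\<in>W. \<exists>c\<in>carrier_vec n. w = P *\<^sub>v c \<and> (\<forall>i. k \<le> i \<longrightarrow> i < n \<longrightarrow> c $ i = 0)"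
proof -
  have Wc: "W \<subseteq> carrier_vec n" and W0in: "0\<^sub>v n \<in> W" using W unfolding is_subspace_def by auto
  have "lin_indpt_cols n 0 (mat n 0 (\<lambda>_. 0))" unfolding lin_indpt_cols_def by (auto intro!: eq_vecI)
  then obtain k B1 where B1: "B1 \<in> carrier_mat n k" "lin_indpt_cols n k B1" "\<forall>j<k. col B1 j \<in> W"
      "\<forall>w\<in>W. \<exists>c\<in>carrier_vec k. w = B1 *\<^sub>v c"
    using extend_lin_indpt_cols_spanning[OF Wc, of "mat n 0 (\<lambda>_. 0)" 0] by auto
  have B1c: "\<forall>j<k. col B1 j \<in> carrier_vec n" using B1(1) by auto
  obtain m B where B: "B \<in> carrier_mat n m" "lin_indpt_cols n m B" "k \<le> m"
      "\<forall>i<n. \<forall>j<k. B $$ (i,j) = B1 $$ (i,j)"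
      "\<forall>w\<in>carrier_vec n. \<exists>c\<in>carrier_vec m. w = B *\<^sub>v c"
    using extend_lin_indpt_cols_spanning[OF subset_refl B1(1) B1(2) B1c] by auto
  have mn: "m = n" using lin_indpt_cols_le[OF B(1) B(2)] spanning_cols_ge[OF B(1) B(5)] by simp
  have Bn: "B \<in> carrier_mat n n" using B(1) mn by simp
  have k0: "0 < k"
  proof (rule ccontr)
    assume "\<not> 0 < k"
    hence "B1 *\<^sub>v c = 0\<^sub>v n" if "c \<in> carrier_vec k" for c
      using B1(1) that mult_mat_vec_zero_cols[of B1 n c] by simp
    hence "W \<subseteq> {0\<^sub>v n}" using B1(4) by auto
    thus False using W0 W0in by auto
  qed
  have BB1: "\<forall>j<k. col B j = col B1 j"
    using B(1,4) B1(1) B(3) by (auto intro!: eq_vecI)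
  have kn: "k < n"
  proof (rule ccontr)
    assume "\<not> k < n" hence k: "k = n" using B(3) mn by simp
    have "B *\<^sub>v c \<in> W" if "c \<in> carrier_vec n" for c
      by (rule subspace_mult_mat_vec_closed[OF W Bn _ that]) (use BB1 B1(3) k in auto)
    hence "carrier_vec n \<subseteq> W" using B(5) unfolding mn by fastforce
    thus False using Wn Wc by auto
  qed
  obtain C where C: "C \<in> carrier_mat n n" and BC: "B * C = 1\<^sub>m n"
    using spanning_cols_right_inverse[OF B(1) B(5)] mn by auto
  have CB: "C * B = 1\<^sub>m n" by (rule mat_mult_left_right_inverse[OF Bn C BC])
  have span: "\<exists>c\<in>carrier_vec n. w = B *\<^sub>v c \<and> (\<forall>i. k \<le> i \<longrightarrow> i < n \<longrightarrow> c $ i = 0)"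
    if w: "w \<in> W" for w
  proof -
    obtain c where c: "c \<in> carrier_vec k" "w = B1 *\<^sub>v c" using B1(4) w by auto
    have "w = B *\<^sub>v vec n (\<lambda>i. if i < k then c $ i else 0)"
      using mult_mat_vec_zero_extend[OF Bn B1(1) _ B(4) c(1)] kn c(2) by simp
    thus ?thesis by (intro bexI[of _ "vec n (\<lambda>i. if i < k then c $ i else 0)"]) auto
  qed
  show thesis by (rule that[OF k0 kn Bn C CB BC]) (use BB1 B1(3) span in auto)
qed

text \<open>Matrices of a given size do not form a type, so sums of families of matrices are taken entrywise.\<close>

definition mat_sum :: "nat \<Rightarrow> nat \<Rightarrow> 'c set \<Rightarrow> ('c \<Rightarrow> complex mat) \<Rightarrow> complex mat" where
  "mat_sum n m S M = mat n m (\<lambda>(i,j). \<Sum>g\<in>S. M g $$ (i,j))"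

lemma mat_sum_carrier [simp]: "mat_sum n m S M \<in> carrier_mat n m"
  unfolding mat_sum_def by simp

lemma dim_mat_sum [simp]: "dim_row (mat_sum n m S M) = n" "dim_col (mat_sum n m S M) = m"
  unfolding mat_sum_def by simp_all

lemma index_mat_sum [simp]: "i < n \<Longrightarrow> j < m \<Longrightarrow> mat_sum n m S M $$ (i,j) = (\<Sum>g\<in>S. M g $$ (i,j))"
  unfolding mat_sum_def by simp

lemma mult_mat_sum_left:
  assumes A: "A \<in> carrier_mat p n" and M: "\<And>g. g \<in> S \<Longrightarrow> M g \<in> carrier_mat n m"
  shows "A * mat_sum n m S M = mat_sum p m S (\<lambda>g. A * M g)"
proof (rule eq_matI)
  fix i j assume "i < dim_row (mat_sum p m S (\<lambda>g. A * M g))" "j < dim_col (mat_sum p m S (\<lambda>g. A * M g))"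
  hence i: "i < p" and j: "j < m" by auto
  have "(A * mat_sum n m S M) $$ (i,j) = (\<Sum>l<n. A $$ (i,l) * (\<Sum>g\<in>S. M g $$ (l,j)))"
    using index_mult_mat_sum[OF A mat_sum_carrier i j] j by simp
  also have "\<dots> = (\<Sum>g\<in>S. \<Sum>l<n. A $$ (i,l) * M g $$ (l,j))"
    by (simp add: sum_distrib_left sum.swap[of _ S])
  also have "\<dots> = (\<Sum>g\<in>S. (A * M g) $$ (i,j))"
    by (rule sum.cong[OF refl]) (simp add: index_mult_mat_sum[OF A M i j])
  finally show "(A * mat_sum n m S M) $$ (i,j) = mat_sum p m S (\<lambda>g. A * M g) $$ (i,j)" using i j by simp
qed (use A in auto)

lemma mult_mat_sum_right:
  assumes A: "A \<in> carrier_mat m p" and M: "\<And>g. g \<in> S \<Longrightarrow> M g \<in> carrier_mat n m"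
  shows "mat_sum n m S M * A = mat_sum n p S (\<lambda>g. M g * A)"
proof (rule eq_matI)
  fix i j assume "i < dim_row (mat_sum n p S (\<lambda>g. M g * A))" "j < dim_col (mat_sum n p S (\<lambda>g. M g * A))"
  hence i: "i < n" and j: "j < p" by auto
  have "(mat_sum n m S M * A) $$ (i,j) = (\<Sum>l<m. (\<Sum>g\<in>S. M g $$ (i,l)) * A $$ (l,j))"
    using index_mult_mat_sum[OF mat_sum_carrier A i j] i by simp
  also have "\<dots> = (\<Sum>g\<in>S. \<Sum>l<m. M g $$ (i,l) * A $$ (l,j))"
    by (simp add: sum_distrib_right sum.swap[of _ S])
  also have "\<dots> = (\<Sum>g\<in>S. (M g * A) $$ (i,j))"
    by (rule sum.cong[OF refl]) (simp add: index_mult_mat_sum[OF M A i j])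
  finally show "(mat_sum n m S M * A) $$ (i,j) = mat_sum n p S (\<lambda>g. M g * A) $$ (i,j)" using i j by simp
qed (use A in auto)

lemma mat_sum_cong: "(\<And>g. g \<in> S \<Longrightarrow> M g = M' g) \<Longrightarrow> mat_sum n m S M = mat_sum n m S M'"
  unfolding mat_sum_def by (auto intro!: eq_matI sum.cong)

lemma mat_sum_reindex:
  assumes "bij_betw h S S'"
  shows "mat_sum n m S' M = mat_sum n m S (\<lambda>g. M (h g))"
proof (rule eq_matI)
  fix i j assume "i < dim_row (mat_sum n m S (\<lambda>g. M (h g)))" "j < dim_col (mat_sum n m S (\<lambda>g. M (h g)))"
  thus "mat_sum n m S' M $$ (i,j) = mat_sum n m S (\<lambda>g. M (h g)) $$ (i,j)"
    using sum.reindex_bij_betw[OF assms, of "\<lambda>g. M g $$ (i,j)"] by simp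
qed auto

lemma mat_trace_mat_sum:
  assumes "\<And>g. g \<in> S \<Longrightarrow> M g \<in> carrier_mat n n"
  shows "mat_trace (mat_sum n n S M) = (\<Sum>g\<in>S. mat_trace (M g))"
proof -
  have "mat_trace (mat_sum n n S M) = (\<Sum>g\<in>S. \<Sum>i<n. M g $$ (i,i))"
    unfolding mat_trace_def by (simp add: sum.swap[of _ S])
  also have "\<dots> = (\<Sum>g\<in>S. mat_trace (M g))"
    unfolding mat_trace_def using assms by (intro sum.cong) auto
  finally show ?thesis .
qed

definition single_mat :: "nat \<Rightarrow> nat \<Rightarrow> nat \<Rightarrow> nat \<Rightarrow> complex mat" where
  "single_mat n m a b = mat n m (\<lambda>(i,j). if i = a \<and> j = b then 1 else 0)"

lemma single_mat_carrier [simp]: "single_mat n m a b \<in> carrier_mat n m"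
  unfolding single_mat_def by simp

lemma dim_single_mat [simp]: "dim_row (single_mat n m a b) = n" "dim_col (single_mat n m a b) = m"
  unfolding single_mat_def by simp_all

lemma index_mult_single_mat:
  assumes A: "A \<in> carrier_mat p n" and B: "B \<in> carrier_mat m q" and a: "a < n" and b: "b < m"
    and i: "i < p" and k: "k < q"
  shows "(A * single_mat n m a b * B) $$ (i,k) = A $$ (i,a) * B $$ (b,k)"
proof -
  have AE: "(A * single_mat n m a b) $$ (i,j) = (if j = b then A $$ (i,a) else 0)" if j: "j < m" for j
  proof -
    have "(A * single_mat n m a b) $$ (i,j) = (\<Sum>l<n. A $$ (i,l) * single_mat n m a b $$ (l,j))"
      by (rule index_mult_mat_sum[OF A single_mat_carrier i j])
    also have "\<dots> = (\<Sum>l<n. if l = a then (if j = b then A $$ (i,a) else 0) else 0)"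
      by (rule sum.cong) (use j in \<open>auto simp: single_mat_def\<close>)
    finally show ?thesis using a by simp
  qed
  have "(A * single_mat n m a b * B) $$ (i,k) = (\<Sum>j<m. (A * single_mat n m a b) $$ (i,j) * B $$ (j,k))"
    by (rule index_mult_mat_sum[OF _ B i k]) (use A in simp)
  also have "\<dots> = (\<Sum>j<m. if j = b then A $$ (i,a) * B $$ (b,k) else 0)"
    by (rule sum.cong) (auto simp: AE)
  finally show ?thesis using b by simp
qed

lemma mat_trace_single_mat: "a < n \<Longrightarrow> b < n \<Longrightarrow> mat_trace (single_mat n n a b) = (if a = b then 1 else 0)"
  unfolding mat_trace_def single_mat_def by (auto simp: sum.If_cases)

section \<open>Representations and characters\<close>

lemma is_rep_carrier: "is_rep G n \<rho> \<Longrightarrow> g \<in> carrier G \<Longrightarrow> \<rho> g \<in> carrier_mat n n"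
  unfolding is_rep_def by auto

lemma is_rep_mult:
  "is_rep G n \<rho> \<Longrightarrow> g \<in> carrier G \<Longrightarrow> h \<in> carrier G \<Longrightarrow> \<rho> (g \<otimes>\<^bsub>G\<^esub> h) = \<rho> g * \<rho> h"
  unfolding is_rep_def by auto

lemma is_rep_one: "is_rep G n \<rho> \<Longrightarrow> \<rho> \<one>\<^bsub>G\<^esub> = 1\<^sub>m n"
  unfolding is_rep_def by auto

lemma is_rep_degree: "is_rep G n \<rho> \<Longrightarrow> n \<ge> 1"
  unfolding is_rep_def by auto

lemma is_irr_rep_is_rep: "is_irr_rep G n \<rho> \<Longrightarrow> is_rep G n \<rho>"
  unfolding is_irr_rep_def by auto

lemma is_subspace_eigenspace:
  fixes T :: "complex mat"
  assumes T: "T \<in> carrier_mat n n"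
  shows "is_subspace n {w \<in> carrier_vec n. T *\<^sub>v w = e \<cdot>\<^sub>v w}"
  unfolding is_subspace_def
proof (intro conjI ballI allI)
  fix x y assume "x \<in> {w \<in> carrier_vec n. T *\<^sub>v w = e \<cdot>\<^sub>v w}" "y \<in> {w \<in> carrier_vec n. T *\<^sub>v w = e \<cdot>\<^sub>v w}"
  thus "x + y \<in> {w \<in> carrier_vec n. T *\<^sub>v w = e \<cdot>\<^sub>v w}"
    using T by (auto simp: mult_add_distrib_mat_vec[OF T] smult_add_distrib_vec)
next
  fix c x assume "x \<in> {w \<in> carrier_vec n. T *\<^sub>v w = e \<cdot>\<^sub>v w}"
  thus "c \<cdot>\<^sub>v x \<in> {w \<in> carrier_vec n. T *\<^sub>v w = e \<cdot>\<^sub>v w}"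
    using T by (auto simp: mult_mat_vec smult_smult_assoc mult.commute)
qed (use T in auto)

lemma schur_lemma:
  assumes r: "is_irr_rep G n \<rho>" and T: "T \<in> carrier_mat n n"
    and comm: "\<forall>g\<in>carrier G. \<rho> g * T = T * \<rho> g"
  obtains a where "T = a \<cdot>\<^sub>m 1\<^sub>m n"
proof -
  note rc = is_rep_carrier[OF is_irr_rep_is_rep[OF r]]
  obtain es where cp: "char_poly T = (\<Prod>a\<leftarrow>es. [:- a, 1:])" and len: "length es = n"
    using char_poly_factorized[OF T] by blast
  obtain e es' where es: "es = e # es'"
    using len is_rep_degree[OF is_irr_rep_is_rep[OF r]] by (cases es) auto
  have "poly (char_poly T) e = 0" unfolding cp es by simp
  hence "eigenvalue T e" using eigenvalue_root_char_poly[OF T] by simp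
  then obtain v where v: "v \<in> carrier_vec n" "v \<noteq> 0\<^sub>v n" "T *\<^sub>v v = e \<cdot>\<^sub>v v"
    unfolding eigenvalue_def eigenvector_def using T by auto
  define W where "W = {w \<in> carrier_vec n. T *\<^sub>v w = e \<cdot>\<^sub>v w}"
  have inv: "\<forall>g\<in>carrier G. \<forall>w\<in>W. \<rho> g *\<^sub>v w \<in> W"
  proof (intro ballI)
    fix g w assume g: "g \<in> carrier G" and w: "w \<in> W"
    have wc: "w \<in> carrier_vec n" using w unfolding W_def by auto
    have "T *\<^sub>v (\<rho> g *\<^sub>v w) = (T * \<rho> g) *\<^sub>v w" using rc[OF g] T wc by simp
    also have "\<dots> = (\<rho> g * T) *\<^sub>v w" using comm g by simp
    also have "\<dots> = \<rho> g *\<^sub>v (T *\<^sub>v w)" using rc[OF g] T wc by simp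
    also have "\<dots> = e \<cdot>\<^sub>v (\<rho> g *\<^sub>v w)" using w rc[OF g] wc unfolding W_def by (simp add: mult_mat_vec)
    finally show "\<rho> g *\<^sub>v w \<in> W" using rc[OF g] wc unfolding W_def by simp
  qed
  have "W \<noteq> {0\<^sub>v n}" using v unfolding W_def by auto
  hence Wall: "W = carrier_vec n"
    using r is_subspace_eigenspace[OF T, of e] inv unfolding is_irr_rep_def W_def by blast
  have "T = e \<cdot>\<^sub>m 1\<^sub>m n"
  proof (rule eq_matI)
    fix i j assume "i < dim_row (e \<cdot>\<^sub>m 1\<^sub>m n)" "j < dim_col (e \<cdot>\<^sub>m 1\<^sub>m n)"
    hence i: "i < n" and j: "j < n" by auto
    have "unit_vec n j \<in> W" using Wall by simp
    hence "(T *\<^sub>v unit_vec n j) $ i = e * (if i = j then 1 else 0)" using i j unfolding W_def by simp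
    thus "T $$ (i,j) = (e \<cdot>\<^sub>m 1\<^sub>m n) $$ (i,j)" using index_mult_mat_unit_vec[OF T j i] i j by simp
  qed (use T in auto)
  thus thesis by (rule that)
qed

context group
begin

lemma is_rep_inv:
  assumes r: "is_rep G n \<rho>" and g: "g \<in> carrier G"
  shows "\<rho> (inv g) * \<rho> g = 1\<^sub>m n" "\<rho> g * \<rho> (inv g) = 1\<^sub>m n"
  using is_rep_mult[OF r, of "inv g" g] is_rep_mult[OF r, of g "inv g"] is_rep_one[OF r] g by auto

lemma is_rep_pow:
  assumes r: "is_rep G n \<rho>" and g: "g \<in> carrier G"
  shows "\<rho> (g [^] (k::nat)) = \<rho> g ^\<^sub>m k"
proof (induction k)
  case (Suc k)
  have "\<rho> (g [^] Suc k) = \<rho> (g [^] k) * \<rho> g" using is_rep_mult[OF r] g by simp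
  thus ?case using Suc by simp
qed (use is_rep_one[OF r] is_rep_carrier[OF r g] in simp)

lemma character_one: assumes "is_rep G n \<rho>" shows "character G \<rho> \<one> = of_nat n"
  using is_rep_one[OF assms] by (simp add: character_def)

lemma character_conj:
  assumes r: "is_rep G n \<rho>" and g: "g \<in> carrier G" and x: "x \<in> carrier G"
  shows "character G \<rho> (x \<otimes> g \<otimes> inv x) = character G \<rho> g"
proof -
  note rc = is_rep_carrier[OF r]
  have "mat_trace (\<rho> x * \<rho> g * \<rho> (inv x)) = mat_trace (\<rho> g)"
    by (rule mat_trace_similar) (use rc is_rep_inv[OF r x] g x in auto)
  thus ?thesis using g x is_rep_mult[OF r] by (simp add: character_def)
qed

lemma mult_inv_cancel_left: "x \<in> carrier G \<Longrightarrow> y \<in> carrier G \<Longrightarrow> x \<otimes> (inv x \<otimes> y) = y"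
  by (simp add: m_assoc[symmetric])

lemma inv_mult_cancel_left: "x \<in> carrier G \<Longrightarrow> y \<in> carrier G \<Longrightarrow> inv x \<otimes> (x \<otimes> y) = y"
  by (simp add: m_assoc[symmetric])

lemma bij_betw_mult_left: "x \<in> carrier G \<Longrightarrow> bij_betw (\<lambda>g. x \<otimes> g) (carrier G) (carrier G)"
  by (rule bij_betwI[where g = "\<lambda>g. inv x \<otimes> g"]) (auto simp: m_assoc[symmetric])

lemma bij_betw_mult_right: "x \<in> carrier G \<Longrightarrow> bij_betw (\<lambda>g. g \<otimes> x) (carrier G) (carrier G)"
  by (rule bij_betwI[where g = "\<lambda>g. g \<otimes> inv x"]) (auto simp: m_assoc)

lemma bij_betw_conj: "x \<in> carrier G \<Longrightarrow> bij_betw (\<lambda>g. inv x \<otimes> g \<otimes> x) (carrier G) (carrier G)"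
  by (rule bij_betwI[where g = "\<lambda>g. x \<otimes> g \<otimes> inv x"]) (auto simp: m_assoc mult_inv_cancel_left inv_mult_cancel_left)

lemma bij_betw_inv: "bij_betw (\<lambda>g. inv g) (carrier G) (carrier G)"
  by (rule bij_betwI[where g = "\<lambda>g. inv g"]) auto

end

locale finite_group = group G for G :: "('a, 'b) monoid_scheme" (structure) +
  assumes finite_carrier: "finite (carrier G)"
begin

lemma card_carrier_pos: "card (carrier G) > 0"
  using finite_carrier one_closed card_gt_0_iff by blast

lemma inv_eq_pow_card_minus_1:
  assumes g: "g \<in> carrier G"
  shows "inv g = g [^] (card (carrier G) - 1)"
proof -
  have "g [^] (card (carrier G) - 1) \<otimes> g = g [^] card (carrier G)"
    using card_carrier_pos g by (metis Suc_diff_1 nat_pow_Suc)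
  also have "\<dots> = \<one>" using pow_order_eq_1[OF g] unfolding Coset.order_def .
  finally show ?thesis using g by (metis inv_equality nat_pow_closed)
qed

lemma rep_pow_card_eq_one:
  assumes r: "is_rep G n \<rho>" and g: "g \<in> carrier G"
  shows "\<rho> g ^\<^sub>m card (carrier G) = 1\<^sub>m n"
proof -
  have "\<rho> g ^\<^sub>m card (carrier G) = \<rho> (g [^] card (carrier G))" by (rule is_rep_pow[OF r g, symmetric])
  also have "g [^] card (carrier G) = \<one>" using pow_order_eq_1[OF g] unfolding Coset.order_def .
  finally show ?thesis using is_rep_one[OF r] by simp
qed

lemma character_inv:
  assumes r: "is_rep G n \<rho>" and g: "g \<in> carrier G"
  shows "character G \<rho> (inv g) = cnj (character G \<rho> g)"
proof -
  have "character G \<rho> (inv g) = mat_trace (\<rho> g ^\<^sub>m (card (carrier G) - 1))"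
    using g inv_eq_pow_card_minus_1[OF g] is_rep_pow[OF r g] by (simp add: character_def)
  also have "\<dots> = cnj (mat_trace (\<rho> g))"
    by (rule mat_trace_of_finite_order(1)[OF is_rep_carrier[OF r g] rep_pow_card_eq_one[OF r g] card_carrier_pos])
  finally show ?thesis using g by (simp add: character_def)
qed

lemma norm_character_le_degree:
  assumes r: "is_rep G n \<rho>" and g: "g \<in> carrier G"
  shows "cmod (character G \<rho> g) \<le> n"
  using mat_trace_of_finite_order(2)[OF is_rep_carrier[OF r g] rep_pow_card_eq_one[OF r g] card_carrier_pos] g
  by (simp add: character_def)

end

definition averaged_intertwiner ::
  "('a, 'b) monoid_scheme \<Rightarrow> ('a \<Rightarrow> complex mat) \<Rightarrow> ('a \<Rightarrow> complex mat) \<Rightarrow> nat \<Rightarrow> nat \<Rightarrow> complex mat \<Rightarrow> complex mat"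
  where "averaged_intertwiner G \<rho> \<sigma> n m X = mat_sum n m (carrier G) (\<lambda>g. \<rho> g * X * \<sigma> (inv\<^bsub>G\<^esub> g))"

lemma averaged_intertwiner_carrier [simp]: "averaged_intertwiner G \<rho> \<sigma> n m X \<in> carrier_mat n m"
  unfolding averaged_intertwiner_def by simp

context group
begin

lemma conj_rep_carrier:
  assumes r: "is_rep G n \<rho>" and s: "is_rep G m \<sigma>" and X: "X \<in> carrier_mat n m" and g: "g \<in> carrier G"
  shows "\<rho> g * X * \<sigma> (inv g) \<in> carrier_mat n m"
  using is_rep_carrier[OF r g] is_rep_carrier[OF s inv_closed[OF g]] X by (meson mult_carrier_mat)

lemma averaged_intertwiner_intertwines:
  assumes r: "is_rep G n \<rho>" and s: "is_rep G m \<sigma>" and X: "X \<in> carrier_mat n m" and x: "x \<in> carrier G"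
  shows "\<rho> x * averaged_intertwiner G \<rho> \<sigma> n m X = averaged_intertwiner G \<rho> \<sigma> n m X * \<sigma> x"
proof -
  note rc = is_rep_carrier[OF r] and sc = is_rep_carrier[OF s]
  have "\<rho> x * averaged_intertwiner G \<rho> \<sigma> n m X
      = mat_sum n m (carrier G) (\<lambda>g. \<rho> x * (\<rho> g * X * \<sigma> (inv g)))"
    unfolding averaged_intertwiner_def by (rule mult_mat_sum_left[OF rc[OF x]]) (use conj_rep_carrier[OF r s X] in auto)
  also have "\<dots> = mat_sum n m (carrier G) (\<lambda>g. \<rho> (x \<otimes> g) * X * \<sigma> (inv g))"
    using assoc_mult_mat4(1)[OF rc[OF x] rc X sc] is_rep_mult[OF r x] by (intro mat_sum_cong) simp
  also have "\<dots> = mat_sum n m (carrier G) (\<lambda>g. \<rho> (x \<otimes> (inv x \<otimes> g)) * X * \<sigma> (inv (inv x \<otimes> g)))"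
    by (rule mat_sum_reindex[OF bij_betw_mult_left]) (use x in simp)
  also have "\<dots> = mat_sum n m (carrier G) (\<lambda>g. (\<rho> g * X * \<sigma> (inv g)) * \<sigma> x)"
  proof (rule mat_sum_cong)
    fix g assume g: "g \<in> carrier G"
    have "x \<otimes> (inv x \<otimes> g) = g" "inv (inv x \<otimes> g) = inv g \<otimes> x"
      using x g by (simp_all add: m_assoc[symmetric] inv_mult_group)
    moreover have "\<rho> g * X * (\<sigma> (inv g) * \<sigma> x) = (\<rho> g * X * \<sigma> (inv g)) * \<sigma> x"
      by (rule assoc_mult_mat[symmetric]) (use rc[OF g] X sc[OF x] sc[of "inv g"] g in auto)
    ultimately show "\<rho> (x \<otimes> (inv x \<otimes> g)) * X * \<sigma> (inv (inv x \<otimes> g)) = (\<rho> g * X * \<sigma> (inv g)) * \<sigma> x"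
      using is_rep_mult[OF s] x g by simp
  qed
  also have "\<dots> = averaged_intertwiner G \<rho> \<sigma> n m X * \<sigma> x"
    unfolding averaged_intertwiner_def
    by (rule mult_mat_sum_right[symmetric, OF sc[OF x]]) (use conj_rep_carrier[OF r s X] in auto)
  finally show ?thesis .
qed

lemma mult_averaged_intertwiner:
  assumes r: "is_rep G n \<rho>" and s: "is_rep G m \<sigma>" and T: "T \<in> carrier_mat n m"
    and Tint: "\<forall>x\<in>carrier G. \<rho> x * T = T * \<sigma> x" and E: "E \<in> carrier_mat m n"
  shows "T * averaged_intertwiner G \<sigma> \<rho> m n E = averaged_intertwiner G \<rho> \<rho> n n (T * E)"
proof -
  note rc = is_rep_carrier[OF r] and sc = is_rep_carrier[OF s]
  have "T * averaged_intertwiner G \<sigma> \<rho> m n E = mat_sum n n (carrier G) (\<lambda>g. T * (\<sigma> g * E * \<rho> (inv g)))"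
    unfolding averaged_intertwiner_def by (rule mult_mat_sum_left[OF T]) (use conj_rep_carrier[OF s r E] in auto)
  also have "\<dots> = mat_sum n n (carrier G) (\<lambda>g. \<rho> g * (T * E) * \<rho> (inv g))"
  proof (rule mat_sum_cong)
    fix g assume g: "g \<in> carrier G"
    have "T * (\<sigma> g * E * \<rho> (inv g)) = (T * \<sigma> g) * E * \<rho> (inv g)"
      by (rule assoc_mult_mat4(1)) (use T sc[OF g] E rc[of "inv g"] g in auto)
    also have "\<dots> = \<rho> g * (T * E) * \<rho> (inv g)"
      using Tint g assoc_mult_mat4(2)[OF rc[OF g] T E rc[of "inv g"]] by simp
    finally show "T * (\<sigma> g * E * \<rho> (inv g)) = \<rho> g * (T * E) * \<rho> (inv g)" .
  qed
  finally show ?thesis unfolding averaged_intertwiner_def .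
qed

text \<open>\<open>S * T\<close> commutes with \<open>\<sigma>\<close>, so it is a scalar by Schur's lemma, and comparing the two ways of
  computing \<open>T * S * T\<close> shows that it is the same scalar as \<open>T * S\<close>.\<close>

lemma character_eq_if_intertwiners:
  assumes r: "is_rep G n \<rho>" and s: "is_irr_rep G m \<sigma>"
    and T: "T \<in> carrier_mat n m" and S: "S \<in> carrier_mat m n"
    and Tint: "\<forall>x\<in>carrier G. \<rho> x * T = T * \<sigma> x" and Sint: "\<forall>x\<in>carrier G. \<sigma> x * S = S * \<rho> x"
    and TS: "T * S = lam \<cdot>\<^sub>m 1\<^sub>m n" and lam: "lam \<noteq> 0"
    and i0: "i0 < n" and l0: "l0 < m" and Tne: "T $$ (i0,l0) \<noteq> 0"
  shows "character G \<rho> = character G \<sigma>"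
proof -
  note rc = is_rep_carrier[OF r] and sc = is_rep_carrier[OF is_irr_rep_is_rep[OF s]]
  have "\<sigma> x * (S * T) = (S * T) * \<sigma> x" if x: "x \<in> carrier G" for x
  proof -
    have "\<sigma> x * (S * T) = (\<sigma> x * S) * T" using sc[OF x] S T by (simp add: assoc_mult_mat[of _ m m _ n _ m])
    also have "\<dots> = (S * \<rho> x) * T" using Sint x by simp
    also have "\<dots> = S * (T * \<sigma> x)"
      using rc[OF x] S T Tint x by (simp add: assoc_mult_mat[of _ m n _ n _ m])
    also have "\<dots> = (S * T) * \<sigma> x" using sc[OF x] S T by (simp add: assoc_mult_mat[of _ m n _ m _ m])
    finally show ?thesis .
  qed
  then obtain mu where ST: "S * T = mu \<cdot>\<^sub>m 1\<^sub>m m"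
    using schur_lemma[OF s, of "S * T"] S T by (meson mult_carrier_mat)
  have "lam \<cdot>\<^sub>m T = (T * S) * T" using TS T by (simp add: mult_smult_assoc_mat[of "1\<^sub>m n" n n T m])
  also have "\<dots> = T * (S * T)" using T S by (simp add: assoc_mult_mat[of _ n m _ n _ m])
  also have "\<dots> = mu \<cdot>\<^sub>m T" using ST T by (simp add: mult_smult_distrib[of T n m "1\<^sub>m m" m])
  finally have "lam * T $$ (i0,l0) = mu * T $$ (i0,l0)"
    by (metis T i0 l0 index_smult_mat(1) carrier_matD(1,2))
  hence mu: "mu = lam" using Tne by simp
  show ?thesis
  proof
    fix g show "character G \<rho> g = character G \<sigma> g"
    proof (cases "g \<in> carrier G")
      case g: True
      have "mat_trace (\<sigma> g * (S * T)) = mat_trace (\<sigma> g * S * T)"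
        using sc[OF g] S T by (simp add: assoc_mult_mat[of _ m m _ n _ m])
      also have "\<dots> = mat_trace (S * (\<rho> g * T))"
        using rc[OF g] S T Sint g by (simp add: assoc_mult_mat[of _ m n _ n _ m])
      also have "\<dots> = mat_trace ((\<rho> g * T) * S)"
        by (rule mat_trace_mult_comm) (use S T rc[OF g] in auto)
      also have "\<dots> = mat_trace (\<rho> g * (T * S))" using rc[OF g] S T by (simp add: assoc_mult_mat[of _ n n _ m _ n])
      finally have "lam * mat_trace (\<sigma> g) = lam * mat_trace (\<rho> g)"
        using ST TS mu sc[OF g] rc[OF g] mat_trace_smult[of "\<sigma> g" m lam] mat_trace_smult[of "\<rho> g" n lam]
        by (simp add: mult_smult_distrib[of "\<sigma> g" m m "1\<^sub>m m" m] mult_smult_distrib[of "\<rho> g" n n "1\<^sub>m n" n])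
      thus ?thesis using lam g by (simp add: character_def)
    qed (simp add: character_def)
  qed
qed

end

context finite_group
begin

lemma averaged_intertwiner_self:
  assumes r: "is_irr_rep G n \<rho>" and Y: "Y \<in> carrier_mat n n"
  shows "averaged_intertwiner G \<rho> \<rho> n n Y = (of_nat (card (carrier G)) * mat_trace Y / of_nat n) \<cdot>\<^sub>m 1\<^sub>m n"
proof -
  note rr = is_irr_rep_is_rep[OF r]
  obtain a where a: "averaged_intertwiner G \<rho> \<rho> n n Y = a \<cdot>\<^sub>m 1\<^sub>m n"
    using schur_lemma[OF r averaged_intertwiner_carrier] averaged_intertwiner_intertwines[OF rr rr Y] by metis
  have "mat_trace (averaged_intertwiner G \<rho> \<rho> n n Y) = (\<Sum>g\<in>carrier G. mat_trace (\<rho> g * Y * \<rho> (inv g)))"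
    unfolding averaged_intertwiner_def by (rule mat_trace_mat_sum) (use conj_rep_carrier[OF rr rr Y] in auto)
  also have "\<dots> = of_nat (card (carrier G)) * mat_trace Y"
    using is_rep_carrier[OF rr] Y is_rep_inv[OF rr] by (simp add: mat_trace_similar)
  finally have "a * of_nat n = of_nat (card (carrier G)) * mat_trace Y"
    using a mat_trace_smult[of "1\<^sub>m n" n a] by simp
  hence "a = of_nat (card (carrier G)) * mat_trace Y / of_nat n"
    using is_rep_degree[OF rr] by (simp add: field_simps)
  thus ?thesis using a by simp
qed

lemma mat_trace_mult_single_mat:
  assumes T: "T \<in> carrier_mat n m" and i0: "i0 < n" and l0: "l0 < m"
  shows "mat_trace (T * single_mat m n l0 i0) = T $$ (i0,l0)"
proof -
  have "mat_trace (T * single_mat m n l0 i0) = mat_trace (single_mat m n l0 i0 * T)"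
    by (rule mat_trace_mult_comm[OF T single_mat_carrier])
  also have "\<dots> = (\<Sum>i<m. (1\<^sub>m m * single_mat m n l0 i0 * T) $$ (i,i))"
    using T left_mult_one_mat[OF single_mat_carrier[of m n l0 i0]] by (simp add: mat_trace_def)
  also have "\<dots> = (\<Sum>i<m. 1\<^sub>m m $$ (i,l0) * T $$ (i0,i))"
    by (rule sum.cong[OF refl], rule index_mult_single_mat) (use T l0 i0 in auto)
  also have "\<dots> = (\<Sum>i<m. if i = l0 then T $$ (i0,i) else 0)"
    by (rule sum.cong) (use l0 in auto)
  finally show ?thesis using l0 by simp
qed

lemma averaged_intertwiner_distinct:
  assumes r: "is_irr_rep G n \<rho>" and s: "is_irr_rep G m \<sigma>"
    and ne: "character G \<rho> \<noteq> character G \<sigma>" and X: "X \<in> carrier_mat n m"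
  shows "averaged_intertwiner G \<rho> \<sigma> n m X = 0\<^sub>m n m"
proof (rule ccontr)
  define T where "T = averaged_intertwiner G \<rho> \<sigma> n m X"
  have T: "T \<in> carrier_mat n m" unfolding T_def by simp
  assume "averaged_intertwiner G \<rho> \<sigma> n m X \<noteq> 0\<^sub>m n m"
  then obtain i0 l0 where i0: "i0 < n" and l0: "l0 < m" and Tne: "T $$ (i0,l0) \<noteq> 0"
    using T unfolding T_def[symmetric] by (metis eq_matI index_zero_mat(1) carrier_matD(1,2) index_zero_mat(2,3))
  note rr = is_irr_rep_is_rep[OF r] and ss = is_irr_rep_is_rep[OF s]
  define S where "S = averaged_intertwiner G \<sigma> \<rho> m n (single_mat m n l0 i0)"
  have Tint: "\<forall>x\<in>carrier G. \<rho> x * T = T * \<sigma> x"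
    unfolding T_def using averaged_intertwiner_intertwines[OF rr ss X] by blast
  have "T * S = averaged_intertwiner G \<rho> \<rho> n n (T * single_mat m n l0 i0)"
    unfolding S_def by (rule mult_averaged_intertwiner[OF rr ss T Tint single_mat_carrier])
  also have "\<dots> = (of_nat (card (carrier G)) * T $$ (i0,l0) / of_nat n) \<cdot>\<^sub>m 1\<^sub>m n"
    using averaged_intertwiner_self[OF r, of "T * single_mat m n l0 i0"] T
    by (simp add: mat_trace_mult_single_mat[OF T i0 l0])
  finally have TS: "T * S = (of_nat (card (carrier G)) * T $$ (i0,l0) / of_nat n) \<cdot>\<^sub>m 1\<^sub>m n" .
  have "character G \<rho> = character G \<sigma>"
  proof (rule character_eq_if_intertwiners[OF rr s T _ Tint _ TS _ i0 l0 Tne])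
    show "S \<in> carrier_mat m n" unfolding S_def by simp
    show "\<forall>x\<in>carrier G. \<sigma> x * S = S * \<rho> x"
      unfolding S_def using averaged_intertwiner_intertwines[OF ss rr single_mat_carrier] by blast
    show "of_nat (card (carrier G)) * T $$ (i0,l0) / of_nat n \<noteq> 0"
      using Tne card_carrier_pos is_rep_degree[OF rr] by simp
  qed
  thus False using ne by simp
qed

lemma sum_character_mult_character_inv:
  assumes r: "is_rep G n \<rho>" and s: "is_rep G m \<sigma>"
  shows "(\<Sum>g\<in>carrier G. character G \<rho> g * character G \<sigma> (inv g)) =
    (\<Sum>i<n. \<Sum>k<m. averaged_intertwiner G \<rho> \<sigma> n m (single_mat n m i k) $$ (i,k))"
proof -
  have "(\<Sum>i<n. \<Sum>k<m. averaged_intertwiner G \<rho> \<sigma> n m (single_mat n m i k) $$ (i,k)) =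
        (\<Sum>i<n. \<Sum>k<m. \<Sum>g\<in>carrier G. \<rho> g $$ (i,i) * \<sigma> (inv g) $$ (k,k))"
    unfolding averaged_intertwiner_def
    by (auto intro!: sum.cong index_mult_single_mat is_rep_carrier[OF r] is_rep_carrier[OF s])
  also have "\<dots> = (\<Sum>g\<in>carrier G. (\<Sum>i<n. \<rho> g $$ (i,i)) * (\<Sum>k<m. \<sigma> (inv g) $$ (k,k)))"
    by (simp add: sum_product sum.swap[of _ "carrier G"])
  also have "\<dots> = (\<Sum>g\<in>carrier G. character G \<rho> g * character G \<sigma> (inv g))"
  proof (rule sum.cong[OF refl])
    fix g assume g: "g \<in> carrier G"
    have "\<rho> g \<in> carrier_mat n n" "\<sigma> (inv g) \<in> carrier_mat m m"
      using is_rep_carrier[OF r g] is_rep_carrier[OF s inv_closed[OF g]] .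
    thus "(\<Sum>i<n. \<rho> g $$ (i,i)) * (\<Sum>k<m. \<sigma> (inv g) $$ (k,k)) = character G \<rho> g * character G \<sigma> (inv g)"
      using g by (simp add: character_def mat_trace_def)
  qed
  finally show ?thesis by simp
qed

lemma irr_character_orthogonality:
  assumes r: "is_irr_rep G n \<rho>" and s: "is_irr_rep G m \<sigma>"
  shows "(\<Sum>g\<in>carrier G. character G \<rho> g * character G \<sigma> (inv g)) =
    (if character G \<rho> = character G \<sigma> then of_nat (card (carrier G)) else 0)"
proof (cases "character G \<rho> = character G \<sigma>")
  case False
  thus ?thesis
    using sum_character_mult_character_inv[OF is_irr_rep_is_rep[OF r] is_irr_rep_is_rep[OF s]]
      averaged_intertwiner_distinct[OF r s False] by simp
next
  case True
  note rr = is_irr_rep_is_rep[OF r]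
  have "(\<Sum>g\<in>carrier G. character G \<rho> g * character G \<sigma> (inv g)) =
      (\<Sum>i<n. \<Sum>k<n. averaged_intertwiner G \<rho> \<rho> n n (single_mat n n i k) $$ (i,k))"
    using True sum_character_mult_character_inv[OF rr rr] by simp
  also have "\<dots> = (\<Sum>i<n. \<Sum>k<n. if k = i then of_nat (card (carrier G)) / of_nat n else 0)"
    using averaged_intertwiner_self[OF r single_mat_carrier] mat_trace_single_mat
    by (intro sum.cong refl) auto
  also have "\<dots> = of_nat (card (carrier G))" using is_rep_degree[OF rr] by simp
  finally show ?thesis using True by simp
qed

lemma IrrE:
  assumes "\<chi> \<in> Irr G"
  obtains n \<rho> where "is_irr_rep G n \<rho>" "\<chi> = character G \<rho>"
  using assms unfolding Irr_def by blast

lemma Irr_inv: "\<chi> \<in> Irr G \<Longrightarrow> g \<in> carrier G \<Longrightarrow> \<chi> (inv g) = cnj (\<chi> g)"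
  by (metis IrrE character_inv is_irr_rep_is_rep)

lemma Irr_conj: "\<chi> \<in> Irr G \<Longrightarrow> g \<in> carrier G \<Longrightarrow> x \<in> carrier G \<Longrightarrow> \<chi> (x \<otimes> g \<otimes> inv x) = \<chi> g"
  by (metis IrrE character_conj is_irr_rep_is_rep)

lemma Irr_norm_le_degree:
  assumes "\<chi> \<in> Irr G" "g \<in> carrier G"
  shows "cmod (\<chi> g) \<le> cmod (\<chi> \<one>)"
proof -
  obtain n \<rho> where r: "is_rep G n \<rho>" and \<chi>: "\<chi> = character G \<rho>"
    using assms(1) by (metis IrrE is_irr_rep_is_rep)
  show ?thesis using norm_character_le_degree[OF r assms(2)] character_one[OF r] \<chi> by simp
qed

lemma Irr_degree_ge_1: "\<chi> \<in> Irr G \<Longrightarrow> cmod (\<chi> \<one>) \<ge> 1"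
  by (metis IrrE character_one is_irr_rep_is_rep is_rep_degree norm_of_nat of_nat_1 of_nat_le_iff)

lemma Irr_orthogonality:
  assumes "\<chi> \<in> Irr G" "\<psi> \<in> Irr G"
  shows "(\<Sum>g\<in>carrier G. \<chi> g * cnj (\<psi> g)) = (if \<chi> = \<psi> then of_nat (card (carrier G)) else 0)"
proof -
  obtain n \<rho> where r: "is_irr_rep G n \<rho>" and c: "\<chi> = character G \<rho>" using assms(1) by (rule IrrE)
  obtain m \<sigma> where s: "is_irr_rep G m \<sigma>" and d: "\<psi> = character G \<sigma>" using assms(2) by (rule IrrE)
  have "(\<Sum>g\<in>carrier G. \<chi> g * cnj (\<psi> g)) = (\<Sum>g\<in>carrier G. \<chi> g * \<psi> (inv g))"
    using Irr_inv[OF assms(2)] by simp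
  also have "\<dots> = (if \<chi> = \<psi> then of_nat (card (carrier G)) else 0)"
    using irr_character_orthogonality[OF r s] c d by simp
  finally show ?thesis .
qed

lemma sum_norm_sq_Irr_combination:
  assumes F: "finite F" "F \<subseteq> Irr G"
  shows "(\<Sum>g\<in>carrier G. (cmod (\<Sum>\<chi>\<in>F. a \<chi> * \<chi> g))\<^sup>2) = card (carrier G) * (\<Sum>\<chi>\<in>F. (cmod (a \<chi>))\<^sup>2)"
proof -
  define w where "w = (\<lambda>g. \<Sum>\<chi>\<in>F. a \<chi> * \<chi> g)"
  have wg: "w g * cnj (w g) = (\<Sum>\<chi>\<in>F. \<Sum>\<psi>\<in>F. (a \<chi> * cnj (a \<psi>)) * (\<chi> g * cnj (\<psi> g)))" for g
    unfolding w_def cnj_sum sum_product by (intro sum.cong refl) (simp add: mult_ac)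
  have "complex_of_real (\<Sum>g\<in>carrier G. (cmod (w g))\<^sup>2) = (\<Sum>g\<in>carrier G. w g * cnj (w g))"
    unfolding of_real_sum by (intro sum.cong refl) (rule complex_norm_square)
  also have "\<dots> = (\<Sum>\<chi>\<in>F. \<Sum>\<psi>\<in>F. (a \<chi> * cnj (a \<psi>)) * (\<Sum>g\<in>carrier G. \<chi> g * cnj (\<psi> g)))"
    unfolding wg sum_distrib_left
    by (subst sum.swap) (intro sum.cong refl, rule sum.swap)
  also have "\<dots> = (\<Sum>\<chi>\<in>F. \<Sum>\<psi>\<in>F. if \<chi> = \<psi> then a \<chi> * cnj (a \<chi>) * of_nat (card (carrier G)) else 0)"
    by (intro sum.cong refl) (auto simp: Irr_orthogonality subsetD[OF F(2)])
  also have "\<dots> = (\<Sum>\<chi>\<in>F. a \<chi> * cnj (a \<chi>) * of_nat (card (carrier G)))"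
    using F(1) by simp
  also have "\<dots> = (\<Sum>\<chi>\<in>F. complex_of_real (card (carrier G) * (cmod (a \<chi>))\<^sup>2))"
    by (intro sum.cong refl) (metis complex_norm_square mult.commute of_real_mult of_real_of_nat_eq)
  also have "\<dots> = complex_of_real (card (carrier G) * (\<Sum>\<chi>\<in>F. (cmod (a \<chi>))\<^sup>2))"
    unfolding of_real_sum[symmetric] sum_distrib_left ..
  finally show ?thesis unfolding w_def of_real_eq_iff .
qed

lemma card_le_if_subset_Irr:
  assumes F: "finite F" "F \<subseteq> Irr G"
  shows "card F \<le> card (carrier G)"
proof -
  define S where "S = (\<Sum>\<chi>\<in>F. (cmod (\<chi> \<one>))\<^sup>2)"
  have S0: "S \<ge> 0" unfolding S_def by (simp add: sum_nonneg)
  have "(\<Sum>\<chi>\<in>F. cnj (\<chi> \<one>) * \<chi> \<one>) = complex_of_real S"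
    unfolding S_def of_real_sum by (intro sum.cong refl) (metis complex_norm_square mult.commute)
  hence "S\<^sup>2 = (cmod (\<Sum>\<chi>\<in>F. cnj (\<chi> \<one>) * \<chi> \<one>))\<^sup>2" using S0 by simp
  also have "\<dots> \<le> (\<Sum>g\<in>carrier G. (cmod (\<Sum>\<chi>\<in>F. cnj (\<chi> \<one>) * \<chi> g))\<^sup>2)"
    by (rule member_le_sum) (auto simp: finite_carrier)
  also have "\<dots> = card (carrier G) * S"
    unfolding sum_norm_sq_Irr_combination[OF F] S_def by simp
  finally have "S \<le> card (carrier G)"
    using S0 by (cases "S = 0") (auto simp: power2_eq_square)
  moreover have "real (card F) \<le> S"
    unfolding S_def using Irr_degree_ge_1 F(2) by (intro sum_bounded_below[where K = 1, simplified]) (auto simp: one_le_power)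
  ultimately show ?thesis by simp
qed

lemma finite_Irr: "finite (Irr G)"
proof (rule ccontr)
  assume "infinite (Irr G)"
  then obtain F where "F \<subseteq> Irr G" "finite F" "card F = Suc (card (carrier G))"
    using infinite_arbitrarily_large by blast
  thus False using card_le_if_subset_Irr by fastforce
qed

end

section \<open>Completeness of the irreducible characters\<close>

lemma is_rep_conj_mat:
  assumes r: "is_rep G n \<rho>" and P: "P \<in> carrier_mat n n" and Q: "Q \<in> carrier_mat n n"
    and QP: "Q * P = 1\<^sub>m n" and PQ: "P * Q = 1\<^sub>m n"
  shows "is_rep G n (\<lambda>g. Q * \<rho> g * P)"
  using r P Q QP mult_conj_mat[OF P Q is_rep_carrier[OF r] is_rep_carrier[OF r] PQ]
  unfolding is_rep_def by auto

lemma adapted_basis_block_zero: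
  fixes A :: "complex mat"
  assumes A: "A \<in> carrier_mat n n" and P: "P \<in> carrier_mat n n" and Q: "Q \<in> carrier_mat n n"
    and QP: "Q * P = 1\<^sub>m n" and colW: "\<forall>j<k. col P j \<in> W"
    and spanW: "\<forall>w\<in>W. \<exists>c\<in>carrier_vec n. w = P *\<^sub>v c \<and> (\<forall>i. k \<le> i \<longrightarrow> i < n \<longrightarrow> c $ i = 0)"
    and inv: "\<forall>v\<in>W. A *\<^sub>v v \<in> W" and i: "k \<le> i" "i < n" and j: "j < k"
  shows "(Q * A * P) $$ (i,j) = 0"
proof -
  have jn: "j < n" using i j by simp
  obtain c where c: "c \<in> carrier_vec n" "A *\<^sub>v col P j = P *\<^sub>v c"
    and c0: "\<forall>i. k \<le> i \<longrightarrow> i < n \<longrightarrow> c $ i = 0" using spanW inv colW j by blast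
  have "(Q * A * P) *\<^sub>v unit_vec n j = Q *\<^sub>v (A *\<^sub>v col P j)"
    using P Q A jn by (simp add: assoc_mult_mat_vec[of _ n n _ n] mult_mat_unit_vec[OF P jn, symmetric])
  also have "\<dots> = c" using c P Q QP by (simp add: assoc_mult_mat_vec[of Q n n P n, symmetric])
  finally show ?thesis using index_mult_mat_unit_vec[of "Q * A * P" n n j i] P Q A jn i c0 by simp
qed

lemma mat_trace_block_split:
  assumes A: "A \<in> carrier_mat n n" and k: "k \<le> n"
  shows "mat_trace A = mat_trace (mat k k (\<lambda>(i,j). A $$ (i,j)))
    + mat_trace (mat (n - k) (n - k) (\<lambda>(i,j). A $$ (i + k, j + k)))"
  using A sum_lessThan_split[OF k, of "\<lambda>i. A $$ (i,i)"] by (simp add: mat_trace_def)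

lemma is_rep_upper_block:
  assumes B: "is_rep G n B" and k: "0 < k" "k \<le> n"
    and zero: "\<And>g i j. g \<in> carrier G \<Longrightarrow> k \<le> i \<Longrightarrow> i < n \<Longrightarrow> j < k \<Longrightarrow> B g $$ (i,j) = 0"
  shows "is_rep G k (\<lambda>g. mat k k (\<lambda>(i,j). B g $$ (i,j)))"
  unfolding is_rep_def
proof (intro conjI ballI)
  show "mat k k (\<lambda>(i,j). B \<one>\<^bsub>G\<^esub> $$ (i,j)) = 1\<^sub>m k" using is_rep_one[OF B] k by (auto intro!: eq_matI)
next
  fix g h assume g: "g \<in> carrier G" and h: "h \<in> carrier G"
  note Bc = is_rep_carrier[OF B]
  show "mat k k (\<lambda>(i,j). B (g \<otimes>\<^bsub>G\<^esub> h) $$ (i,j))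
      = mat k k (\<lambda>(i,j). B g $$ (i,j)) * mat k k (\<lambda>(i,j). B h $$ (i,j))"
  proof (rule eq_matI)
    fix i j assume "i < dim_row (mat k k (\<lambda>(i,j). B g $$ (i,j)) * mat k k (\<lambda>(i,j). B h $$ (i,j)))"
      "j < dim_col (mat k k (\<lambda>(i,j). B g $$ (i,j)) * mat k k (\<lambda>(i,j). B h $$ (i,j)))"
    hence i: "i < k" and j: "j < k" by auto
    have "B (g \<otimes>\<^bsub>G\<^esub> h) $$ (i,j) = (\<Sum>l<n. B g $$ (i,l) * B h $$ (l,j))"
      using is_rep_mult[OF B g h] index_mult_mat_sum[OF Bc[OF g] Bc[OF h]] i j k by simp
    also have "\<dots> = (\<Sum>l<k. B g $$ (i,l) * B h $$ (l,j))"
      using sum_lessThan_split[OF k(2), of "\<lambda>l. B g $$ (i,l) * B h $$ (l,j)"] zero[OF h] j by simp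
    finally show "mat k k (\<lambda>(i,j). B (g \<otimes>\<^bsub>G\<^esub> h) $$ (i,j)) $$ (i,j)
        = (mat k k (\<lambda>(i,j). B g $$ (i,j)) * mat k k (\<lambda>(i,j). B h $$ (i,j))) $$ (i,j)"
      using i j by (simp add: scalar_prod_def lessThan_atLeast0)
  qed auto
qed (use k in auto)

lemma is_rep_lower_block:
  assumes B: "is_rep G n B" and k: "k < n"
    and zero: "\<And>g i j. g \<in> carrier G \<Longrightarrow> k \<le> i \<Longrightarrow> i < n \<Longrightarrow> j < k \<Longrightarrow> B g $$ (i,j) = 0"
  shows "is_rep G (n - k) (\<lambda>g. mat (n - k) (n - k) (\<lambda>(i,j). B g $$ (i + k, j + k)))"
  unfolding is_rep_def
proof (intro conjI ballI)
  show "mat (n - k) (n - k) (\<lambda>(i,j). B \<one>\<^bsub>G\<^esub> $$ (i + k, j + k)) = 1\<^sub>m (n - k)"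
    using is_rep_one[OF B] k by (auto intro!: eq_matI)
next
  fix g h assume g: "g \<in> carrier G" and h: "h \<in> carrier G"
  note Bc = is_rep_carrier[OF B]
  let ?B = "\<lambda>g. mat (n - k) (n - k) (\<lambda>(i,j). B g $$ (i + k, j + k))"
  show "?B (g \<otimes>\<^bsub>G\<^esub> h) = ?B g * ?B h"
  proof (rule eq_matI)
    fix i j assume "i < dim_row (?B g * ?B h)" "j < dim_col (?B g * ?B h)"
    hence i: "i < n - k" and j: "j < n - k" by auto
    have "B (g \<otimes>\<^bsub>G\<^esub> h) $$ (i + k, j + k) = (\<Sum>l<n. B g $$ (i + k, l) * B h $$ (l, j + k))"
      using is_rep_mult[OF B g h] index_mult_mat_sum[OF Bc[OF g] Bc[OF h]] i j by simp
    also have "\<dots> = (\<Sum>l<n - k. B g $$ (i + k, l + k) * B h $$ (l + k, j + k))"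
      using sum_lessThan_split[of k n "\<lambda>l. B g $$ (i + k, l) * B h $$ (l, j + k)"] zero[OF g] i k by simp
    finally show "?B (g \<otimes>\<^bsub>G\<^esub> h) $$ (i,j) = (?B g * ?B h) $$ (i,j)"
      using i j by (simp add: scalar_prod_def lessThan_atLeast0)
  qed auto
qed (use k in auto)

text \<open>No complement of the invariant subspace is needed: in an adapted basis the representation
  is block upper triangular, and the trace only sees the two diagonal blocks.\<close>

lemma reducible_rep_trace_split:
  assumes r: "is_rep G n \<rho>" and nirr: "\<not> is_irr_rep G n \<rho>"
  obtains k1 \<rho>1 k2 \<rho>2 where "k1 < n" "k2 < n" "is_rep G k1 \<rho>1" "is_rep G k2 \<rho>2"
    "\<And>g. g \<in> carrier G \<Longrightarrow> mat_trace (\<rho> g) = mat_trace (\<rho>1 g) + mat_trace (\<rho>2 g)"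
proof -
  note rc = is_rep_carrier[OF r]
  obtain W where W: "is_subspace n W" "\<forall>g\<in>carrier G. \<forall>v\<in>W. \<rho> g *\<^sub>v v \<in> W"
    "W \<noteq> {0\<^sub>v n}" "W \<noteq> carrier_vec n"
    using nirr r unfolding is_irr_rep_def by blast
  obtain k P Q where k: "0 < k" "k < n" and P: "P \<in> carrier_mat n n" and Q: "Q \<in> carrier_mat n n"
    and QP: "Q * P = 1\<^sub>m n" and PQ: "P * Q = 1\<^sub>m n" and colW: "\<forall>j<k. col P j \<in> W"
    and spanW: "\<forall>w\<in>W. \<exists>c\<in>carrier_vec n. w = P *\<^sub>v c \<and> (\<forall>i. k \<le> i \<longrightarrow> i < n \<longrightarrow> c $ i = 0)"
    using subspace_adapted_basis[OF W(1) W(3) W(4)] by blast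
  define B where "B = (\<lambda>g. Q * \<rho> g * P)"
  have B: "is_rep G n B" unfolding B_def by (rule is_rep_conj_mat[OF r P Q QP PQ])
  have zero: "B g $$ (i,j) = 0" if "g \<in> carrier G" "k \<le> i" "i < n" "j < k" for g i j
    unfolding B_def using adapted_basis_block_zero[OF rc P Q QP colW spanW] W(2) that by blast
  show thesis
  proof (rule that[OF _ _ is_rep_upper_block[OF B k(1) less_imp_le[OF k(2)] zero] is_rep_lower_block[OF B k(2) zero]])
    fix g assume g: "g \<in> carrier G"
    have "mat_trace (\<rho> g) = mat_trace (B g)"
      unfolding B_def by (rule mat_trace_similar[symmetric]) (use Q P PQ rc[OF g] in auto)
    thus "mat_trace (\<rho> g) = mat_trace (mat k k (\<lambda>(i,j). B g $$ (i,j)))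
        + mat_trace (mat (n - k) (n - k) (\<lambda>(i,j). B g $$ (i + k, j + k)))"
      using mat_trace_block_split[OF is_rep_carrier[OF B g]] k by simp
  qed (use k in auto)
qed

definition fourier_transform ::
  "('a, 'b) monoid_scheme \<Rightarrow> ('a \<Rightarrow> complex) \<Rightarrow> nat \<Rightarrow> ('a \<Rightarrow> complex mat) \<Rightarrow> complex mat"
  where "fourier_transform G f n \<sigma> = mat_sum n n (carrier G) (\<lambda>g. f g \<cdot>\<^sub>m \<sigma> g)"

lemma mat_trace_fourier_transform:
  assumes r: "is_rep G n \<rho>"
  shows "mat_trace (fourier_transform G f n \<rho>) = (\<Sum>g\<in>carrier G. f g * mat_trace (\<rho> g))"
proof -
  have "mat_trace (fourier_transform G f n \<rho>) = (\<Sum>g\<in>carrier G. mat_trace (f g \<cdot>\<^sub>m \<rho> g))"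
    unfolding fourier_transform_def by (rule mat_trace_mat_sum) (use is_rep_carrier[OF r] in auto)
  also have "\<dots> = (\<Sum>g\<in>carrier G. f g * mat_trace (\<rho> g))"
    by (rule sum.cong[OF refl]) (use is_rep_carrier[OF r] mat_trace_smult in auto)
  finally show ?thesis .
qed

lemma sum_mult_trace_eq_0_if_fourier_transform_irr_eq_0:
  assumes irr0: "\<And>k \<sigma>. is_irr_rep G k \<sigma> \<Longrightarrow> fourier_transform G f k \<sigma> = 0\<^sub>m k k"
  shows "is_rep G n \<rho> \<Longrightarrow> (\<Sum>g\<in>carrier G. f g * mat_trace (\<rho> g)) = 0"
proof (induction n arbitrary: \<rho> rule: less_induct)
  case (less n \<rho>)
  show ?case
  proof (cases "is_irr_rep G n \<rho>")
    case True
    thus ?thesis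
      using mat_trace_fourier_transform[OF less.prems, of f] irr0 by (simp add: mat_trace_def)
  next
    case False
    obtain k1 \<rho>1 k2 \<rho>2 where "k1 < n" "k2 < n" "is_rep G k1 \<rho>1" "is_rep G k2 \<rho>2"
      and tr: "\<And>g. g \<in> carrier G \<Longrightarrow> mat_trace (\<rho> g) = mat_trace (\<rho>1 g) + mat_trace (\<rho>2 g)"
      using reducible_rep_trace_split[OF less.prems False] by metis
    moreover have "(\<Sum>g\<in>carrier G. f g * mat_trace (\<rho> g)) =
      (\<Sum>g\<in>carrier G. f g * mat_trace (\<rho>1 g)) + (\<Sum>g\<in>carrier G. f g * mat_trace (\<rho>2 g))"
      using tr by (simp add: distrib_left sum.distrib)
    ultimately show ?thesis using less.IH by simp
  qed
qed

context group
begin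

lemma fourier_transform_translate:
  assumes s: "is_rep G k \<sigma>" and y: "y \<in> carrier G"
  shows "fourier_transform G (\<lambda>g. f (g \<otimes> y)) k \<sigma> = fourier_transform G f k \<sigma> * \<sigma> (inv y)"
proof -
  note sc = is_rep_carrier[OF s]
  have iy: "inv y \<in> carrier G" using y by simp
  have "fourier_transform G (\<lambda>g. f (g \<otimes> y)) k \<sigma>
      = mat_sum k k (carrier G) (\<lambda>h. f (h \<otimes> inv y \<otimes> y) \<cdot>\<^sub>m \<sigma> (h \<otimes> inv y))"
    unfolding fourier_transform_def by (rule mat_sum_reindex[OF bij_betw_mult_right[OF iy]])
  also have "\<dots> = mat_sum k k (carrier G) (\<lambda>h. (f h \<cdot>\<^sub>m \<sigma> h) * \<sigma> (inv y))"
    using is_rep_mult[OF s _ iy] mult_smult_assoc_mat[OF sc sc[OF iy]] y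
    by (intro mat_sum_cong) (simp add: m_assoc)
  also have "\<dots> = fourier_transform G f k \<sigma> * \<sigma> (inv y)"
    unfolding fourier_transform_def by (rule mult_mat_sum_right[symmetric, OF sc[OF iy]]) (use sc in auto)
  finally show ?thesis .
qed

lemma fourier_transform_class_function_commutes:
  assumes cls: "\<forall>g\<in>carrier G. \<forall>x\<in>carrier G. f (x \<otimes> g \<otimes> inv x) = f g"
    and s: "is_rep G k \<sigma>" and x: "x \<in> carrier G"
  shows "\<sigma> x * fourier_transform G f k \<sigma> = fourier_transform G f k \<sigma> * \<sigma> x"
proof -
  note sc = is_rep_carrier[OF s]
  have "\<sigma> x * fourier_transform G f k \<sigma> = mat_sum k k (carrier G) (\<lambda>g. f g \<cdot>\<^sub>m \<sigma> (x \<otimes> g))"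
    unfolding fourier_transform_def
    using mult_mat_sum_left[OF sc[OF x], of "carrier G" "\<lambda>g. f g \<cdot>\<^sub>m \<sigma> g"] sc
      mult_smult_distrib[OF sc[OF x] sc] is_rep_mult[OF s x]
    by (auto intro!: mat_sum_cong)
  also have "\<dots> = mat_sum k k (carrier G) (\<lambda>h. f (inv x \<otimes> h \<otimes> x) \<cdot>\<^sub>m \<sigma> (x \<otimes> (inv x \<otimes> h \<otimes> x)))"
    by (rule mat_sum_reindex[OF bij_betw_conj[OF x]])
  also have "\<dots> = mat_sum k k (carrier G) (\<lambda>h. (f h \<cdot>\<^sub>m \<sigma> h) * \<sigma> x)"
  proof (rule mat_sum_cong)
    fix h assume h: "h \<in> carrier G"
    have "f (inv x \<otimes> h \<otimes> x) = f h" using cls h x by (metis inv_closed inv_inv)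
    moreover have "x \<otimes> (inv x \<otimes> h \<otimes> x) = h \<otimes> x" using x h by (simp add: m_assoc[symmetric])
    ultimately show "f (inv x \<otimes> h \<otimes> x) \<cdot>\<^sub>m \<sigma> (x \<otimes> (inv x \<otimes> h \<otimes> x)) = (f h \<cdot>\<^sub>m \<sigma> h) * \<sigma> x"
      using mult_smult_assoc_mat[OF sc[OF h] sc[OF x]] is_rep_mult[OF s h x] by simp
  qed
  also have "\<dots> = fourier_transform G f k \<sigma> * \<sigma> x"
    unfolding fourier_transform_def by (rule mult_mat_sum_right[symmetric, OF sc[OF x]]) (use sc in auto)
  finally show ?thesis .
qed

end

definition regular_rep :: "('a, 'b) monoid_scheme \<Rightarrow> 'a list \<Rightarrow> 'a \<Rightarrow> complex mat" where
  "regular_rep G xs g = mat (length xs) (length xs) (\<lambda>(i,j). if xs ! i = g \<otimes>\<^bsub>G\<^esub> xs ! j then 1 else 0)"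

context group
begin

lemma regular_rep_mult:
  assumes xs: "set xs = carrier G" "distinct xs" and g: "g \<in> carrier G" and h: "h \<in> carrier G"
  shows "regular_rep G xs (g \<otimes> h) = regular_rep G xs g * regular_rep G xs h"
proof (rule eq_matI)
  let ?n = "length xs"
  have R: "regular_rep G xs x \<in> carrier_mat ?n ?n" for x unfolding regular_rep_def by simp
  have inj: "i < ?n \<Longrightarrow> j < ?n \<Longrightarrow> xs ! i = xs ! j \<longleftrightarrow> i = j" for i j
    using xs(2) by (simp add: nth_eq_iff_index_eq)
  fix i j assume "i < dim_row (regular_rep G xs g * regular_rep G xs h)"
    "j < dim_col (regular_rep G xs g * regular_rep G xs h)"
  hence i: "i < ?n" and j: "j < ?n" unfolding regular_rep_def by auto
  have xj: "xs ! j \<in> carrier G" using xs(1) j nth_mem by blast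
  hence "h \<otimes> xs ! j \<in> set xs" using xs(1) h by simp
  then obtain l0 where l0: "l0 < ?n" "xs ! l0 = h \<otimes> xs ! j" unfolding in_set_conv_nth by blast
  have "(regular_rep G xs g * regular_rep G xs h) $$ (i,j)
      = (\<Sum>l<?n. regular_rep G xs g $$ (i,l) * regular_rep G xs h $$ (l,j))"
    by (rule index_mult_mat_sum[OF R R i j])
  also have "\<dots> = (\<Sum>l<?n. if l = l0 then (if xs ! i = g \<otimes> (h \<otimes> xs ! j) then 1 else 0) else 0)"
  proof (rule sum.cong[OF refl])
    fix l assume "l \<in> {..<?n}"
    hence l: "l < ?n" by simp
    show "regular_rep G xs g $$ (i,l) * regular_rep G xs h $$ (l,j)
        = (if l = l0 then (if xs ! i = g \<otimes> (h \<otimes> xs ! j) then 1 else 0) else 0)"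
    proof (cases "l = l0")
      case True thus ?thesis using l0 i j l unfolding regular_rep_def by simp
    next
      case False
      hence "xs ! l \<noteq> h \<otimes> xs ! j" using inj[OF l l0(1)] l0(2) by simp
      thus ?thesis using False i j l unfolding regular_rep_def by simp
    qed
  qed
  also have "\<dots> = (if xs ! i = g \<otimes> (h \<otimes> xs ! j) then 1 else 0)" using l0 by simp
  also have "\<dots> = regular_rep G xs (g \<otimes> h) $$ (i,j)"
    using i j g h xj unfolding regular_rep_def by (simp add: m_assoc)
  finally show "regular_rep G xs (g \<otimes> h) $$ (i,j) = (regular_rep G xs g * regular_rep G xs h) $$ (i,j)" ..
qed (simp_all add: regular_rep_def)

lemma is_rep_regular_rep:
  assumes xs: "set xs = carrier G" "distinct xs"
  shows "is_rep G (length xs) (regular_rep G xs)"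
  unfolding is_rep_def
proof (intro conjI ballI)
  show "1 \<le> length xs" using xs(1) one_closed by (cases xs) auto
  show "regular_rep G xs \<one> = 1\<^sub>m (length xs)"
  proof (rule eq_matI)
    fix i j assume "i < dim_row (1\<^sub>m (length xs) :: complex mat)" "j < dim_col (1\<^sub>m (length xs) :: complex mat)"
    hence i: "i < length xs" and j: "j < length xs" by auto
    have "xs ! j \<in> carrier G" using xs(1) j nth_mem by blast
    hence "\<one> \<otimes> xs ! j = xs ! j" by simp
    moreover have "xs ! i = xs ! j \<longleftrightarrow> i = j" using xs(2) i j by (simp add: nth_eq_iff_index_eq)
    ultimately show "regular_rep G xs \<one> $$ (i,j) = 1\<^sub>m (length xs) $$ (i,j)"
      using i j unfolding regular_rep_def by simp
  qed (simp_all add: regular_rep_def)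
next
  fix g show "regular_rep G xs g \<in> carrier_mat (length xs) (length xs)" by (simp add: regular_rep_def)
next
  fix g h assume "g \<in> carrier G" "h \<in> carrier G"
  thus "regular_rep G xs (g \<otimes> h) = regular_rep G xs g * regular_rep G xs h" by (rule regular_rep_mult[OF xs])
qed

lemma mat_trace_regular_rep:
  assumes xs: "set xs = carrier G" and g: "g \<in> carrier G"
  shows "mat_trace (regular_rep G xs g) = (if g = \<one> then of_nat (length xs) else 0)"
proof -
  have "xs ! i = g \<otimes> xs ! i \<longleftrightarrow> g = \<one>" if "i < length xs" for i
  proof -
    have "xs ! i \<in> carrier G" using xs that nth_mem by blast
    thus ?thesis using r_cancel_one'[OF _ g] by blast
  qed
  thus ?thesis unfolding mat_trace_def regular_rep_def by simp
qed

end

context finite_group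
begin

lemma eq_0_if_fourier_transform_irr_eq_0:
  assumes irr0: "\<And>k \<sigma>. is_irr_rep G k \<sigma> \<Longrightarrow> fourier_transform G f k \<sigma> = 0\<^sub>m k k"
    and y: "y \<in> carrier G"
  shows "f y = 0"
proof -
  have translate0: "fourier_transform G (\<lambda>g. f (g \<otimes> y)) k \<sigma> = 0\<^sub>m k k"
    if s: "is_irr_rep G k \<sigma>" for k \<sigma>
    using fourier_transform_translate[OF is_irr_rep_is_rep[OF s] y] irr0[OF s]
      is_rep_carrier[OF is_irr_rep_is_rep[OF s] inv_closed[OF y]] by simp
  obtain xs where xs: "set xs = carrier G" "distinct xs" using finite_distinct_list[OF finite_carrier] by blast
  have "0 = (\<Sum>g\<in>carrier G. f (g \<otimes> y) * mat_trace (regular_rep G xs g))"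
    using sum_mult_trace_eq_0_if_fourier_transform_irr_eq_0[OF translate0 is_rep_regular_rep[OF xs]] by simp
  also have "\<dots> = (\<Sum>g\<in>carrier G. if g = \<one> then f (g \<otimes> y) * of_nat (length xs) else 0)"
    using mat_trace_regular_rep[OF xs(1)] by (intro sum.cong) auto
  also have "\<dots> = f y * of_nat (length xs)" using finite_carrier y by simp
  finally have "f y * of_nat (length xs) = 0" by (rule sym)
  moreover have "length xs > 0" using xs one_closed by (cases xs) auto
  ultimately show ?thesis by simp
qed

lemma fourier_transform_class_function_irr:
  assumes orth: "\<forall>\<chi>\<in>Irr G. (\<Sum>g\<in>carrier G. f g * \<chi> g) = 0"
    and cls: "\<forall>g\<in>carrier G. \<forall>x\<in>carrier G. f (x \<otimes> g \<otimes> inv x) = f g"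
    and s: "is_irr_rep G k \<sigma>"
  shows "fourier_transform G f k \<sigma> = 0\<^sub>m k k"
proof -
  note ss = is_irr_rep_is_rep[OF s]
  have comm: "\<forall>x\<in>carrier G. \<sigma> x * fourier_transform G f k \<sigma> = fourier_transform G f k \<sigma> * \<sigma> x"
    using fourier_transform_class_function_commutes[OF cls ss] by blast
  have "fourier_transform G f k \<sigma> \<in> carrier_mat k k" by (simp add: fourier_transform_def)
  then obtain a where a: "fourier_transform G f k \<sigma> = a \<cdot>\<^sub>m 1\<^sub>m k"
    using schur_lemma[OF s _ comm] by blast
  have "a * of_nat k = mat_trace (fourier_transform G f k \<sigma>)" using a mat_trace_smult[of "1\<^sub>m k" k a] by simp
  also have "\<dots> = (\<Sum>g\<in>carrier G. f g * character G \<sigma> g)"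
    by (simp add: mat_trace_fourier_transform[OF ss] character_def)
  also have "\<dots> = 0" using orth s unfolding Irr_def by blast
  finally have "a = 0" using is_rep_degree[OF ss] by simp
  thus ?thesis using a by (auto intro!: eq_matI)
qed

lemma class_function_eq_0_if_orthogonal_Irr:
  assumes orth: "\<forall>\<chi>\<in>Irr G. (\<Sum>g\<in>carrier G. f g * cnj (\<chi> g)) = 0"
    and cls: "\<forall>g\<in>carrier G. \<forall>x\<in>carrier G. f (x \<otimes> g \<otimes> inv x) = f g"
    and y: "y \<in> carrier G"
  shows "f y = 0"
proof -
  have orth': "\<forall>\<chi>\<in>Irr G. (\<Sum>g\<in>carrier G. f (inv g) * \<chi> g) = 0"
  proof
    fix \<chi> assume \<chi>: "\<chi> \<in> Irr G"
    have "(\<Sum>g\<in>carrier G. f (inv g) * \<chi> g) = (\<Sum>g\<in>carrier G. f g * \<chi> (inv g))"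
      using sum.reindex_bij_betw[OF bij_betw_inv, of "\<lambda>g. f g * \<chi> (inv g)"] by simp
    also have "\<dots> = 0" using orth \<chi> Irr_inv[OF \<chi>] by simp
    finally show "(\<Sum>g\<in>carrier G. f (inv g) * \<chi> g) = 0" .
  qed
  have cls': "\<forall>g\<in>carrier G. \<forall>x\<in>carrier G. f (inv (x \<otimes> g \<otimes> inv x)) = f (inv g)"
    using cls by (simp add: inv_mult_group m_assoc)
  have "f (inv (inv y)) = 0"
    by (rule eq_0_if_fourier_transform_irr_eq_0[OF fourier_transform_class_function_irr[OF orth' cls'] inv_closed[OF y]])
  thus ?thesis using y by simp
qed

end

context group
begin

lemma conj_class_subset: "h \<in> carrier G \<Longrightarrow> conj_class G h \<subseteq> carrier G"
  unfolding conj_class_def by auto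

lemma conj_class_self: "h \<in> carrier G \<Longrightarrow> h \<in> conj_class G h"
  unfolding conj_class_def by (rule CollectI, rule exI[of _ \<one>]) auto

lemma conj_class_one: "conj_class G \<one> = {\<one>}"
  unfolding conj_class_def by force

lemma conj_mem_conj_class_iff:
  assumes h: "h \<in> carrier G" and x: "x \<in> carrier G" and g: "g \<in> carrier G"
  shows "x \<otimes> g \<otimes> inv x \<in> conj_class G h \<longleftrightarrow> g \<in> conj_class G h"
proof
  assume "g \<in> conj_class G h"
  then obtain a where a: "a \<in> carrier G" "g = a \<otimes> h \<otimes> inv a" unfolding conj_class_def by auto
  have "x \<otimes> g \<otimes> inv x = (x \<otimes> a) \<otimes> h \<otimes> inv (x \<otimes> a)"
    using a x h by (simp add: m_assoc inv_mult_group)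
  thus "x \<otimes> g \<otimes> inv x \<in> conj_class G h" using a x unfolding conj_class_def by blast
next
  assume "x \<otimes> g \<otimes> inv x \<in> conj_class G h"
  then obtain a where a: "a \<in> carrier G" "x \<otimes> g \<otimes> inv x = a \<otimes> h \<otimes> inv a" unfolding conj_class_def by auto
  have "g = inv x \<otimes> (x \<otimes> g \<otimes> inv x) \<otimes> x"
    using x g by (simp add: m_assoc inv_mult_cancel_left)
  also have "\<dots> = (inv x \<otimes> a) \<otimes> h \<otimes> inv (inv x \<otimes> a)"
    using a x h by (simp add: m_assoc inv_mult_group)
  finally show "g \<in> conj_class G h" using a x unfolding conj_class_def by blast
qed

end

context finite_group
begin

lemma finite_conj_class: "h \<in> carrier G \<Longrightarrow> finite (conj_class G h)"
  using conj_class_subset finite_carrier finite_subset by blast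

lemma card_conj_class_ge_1: "h \<in> carrier G \<Longrightarrow> card (conj_class G h) \<ge> 1"
  using finite_conj_class conj_class_self by (metis One_nat_def Suc_leI card_gt_0_iff empty_iff)

lemma Irr_conj_class: "\<chi> \<in> Irr G \<Longrightarrow> h \<in> carrier G \<Longrightarrow> g \<in> conj_class G h \<Longrightarrow> \<chi> g = \<chi> h"
  unfolding conj_class_def using Irr_conj by auto

lemma sum_Irr_combination_mult_cnj:
  assumes \<psi>: "\<psi> \<in> Irr G"
  shows "(\<Sum>g\<in>carrier G. (\<Sum>\<chi>\<in>Irr G. c \<chi> * \<chi> g) * cnj (\<psi> g)) = c \<psi> * of_nat (card (carrier G))"
proof -
  have "(\<Sum>g\<in>carrier G. (\<Sum>\<chi>\<in>Irr G. c \<chi> * \<chi> g) * cnj (\<psi> g))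
      = (\<Sum>\<chi>\<in>Irr G. c \<chi> * (\<Sum>g\<in>carrier G. \<chi> g * cnj (\<psi> g)))"
    unfolding sum_distrib_right sum_distrib_left by (subst sum.swap) (simp add: mult.assoc)
  also have "\<dots> = (\<Sum>\<chi>\<in>Irr G. if \<chi> = \<psi> then c \<chi> * of_nat (card (carrier G)) else 0)"
    by (intro sum.cong refl) (simp add: Irr_orthogonality \<psi>)
  also have "\<dots> = c \<psi> * of_nat (card (carrier G))" using finite_Irr \<psi> by simp
  finally show ?thesis .
qed

text \<open>The indicator of a conjugacy class minus its expansion in the irreducible characters
  is a class function orthogonal to every irreducible character, hence zero.\<close>

lemma column_orthogonality:
  assumes h0: "h0 \<in> carrier G" and h: "h \<in> carrier G"
  shows "(\<Sum>\<chi>\<in>Irr G. cnj (\<chi> h0) * \<chi> h) =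
    (if h \<in> conj_class G h0 then of_nat (card (carrier G)) / of_nat (card (conj_class G h0)) else 0)"
proof -
  define K where "K = conj_class G h0"
  define c where "c = (\<lambda>\<chi>::'a \<Rightarrow> complex. of_nat (card K) / of_nat (card (carrier G)) * cnj (\<chi> h0))"
  define f where "f = (\<lambda>g. (if g \<in> K then 1 else 0) - (\<Sum>\<chi>\<in>Irr G. c \<chi> * \<chi> g))"
  have K: "K \<subseteq> carrier G" "card K \<ge> 1"
    unfolding K_def using conj_class_subset[OF h0] card_conj_class_ge_1[OF h0] by auto
  have "(\<Sum>g\<in>carrier G. f g * cnj (\<psi> g)) = 0" if \<psi>: "\<psi> \<in> Irr G" for \<psi>
  proof -
    have "(\<Sum>g\<in>carrier G. (if g \<in> K then 1 else 0) * cnj (\<psi> g))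
        = (\<Sum>g\<in>carrier G. if g \<in> K then cnj (\<psi> g) else 0)"
      by (intro sum.cong) auto
    also have "\<dots> = (\<Sum>g\<in>K. cnj (\<psi> g))"
      using K finite_carrier by (simp add: sum.If_cases Int_absorb1)
    also have "\<dots> = of_nat (card K) * cnj (\<psi> h0)"
      using Irr_conj_class[OF \<psi> h0] unfolding K_def by simp
    also have "\<dots> = c \<psi> * of_nat (card (carrier G))" unfolding c_def using card_carrier_pos by simp
    finally show ?thesis
      unfolding f_def left_diff_distrib sum_subtractf sum_Irr_combination_mult_cnj[OF \<psi>] by simp
  qed
  moreover have "f (x \<otimes> g \<otimes> inv x) = f g" if "g \<in> carrier G" "x \<in> carrier G" for g x
  proof -
    have "(\<Sum>\<chi>\<in>Irr G. c \<chi> * \<chi> (x \<otimes> g \<otimes> inv x)) = (\<Sum>\<chi>\<in>Irr G. c \<chi> * \<chi> g)"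
      using Irr_conj that by (intro sum.cong) auto
    thus ?thesis unfolding f_def K_def using conj_mem_conj_class_iff[OF h0 that(2,1)] by simp
  qed
  ultimately have "f h = 0" using class_function_eq_0_if_orthogonal_Irr h by blast
  hence "(if h \<in> K then 1 else 0) = of_nat (card K) / of_nat (card (carrier G)) * (\<Sum>\<chi>\<in>Irr G. cnj (\<chi> h0) * \<chi> h)"
    unfolding f_def c_def by (simp add: sum_distrib_left mult.assoc)
  thus ?thesis using K(2) card_carrier_pos unfolding K_def by (auto simp: field_simps split: if_splits)
qed

end

section \<open>Bounds on \<open>D_H\<close>\<close>

lemma mult_le_weighted_squares:
  fixes a b t :: real
  assumes t: "t > 0"
  shows "a * b \<le> (t * a\<^sup>2 + b\<^sup>2 / t) / 2"
proof -
  have "0 \<le> (t * a - b)\<^sup>2" by simp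
  hence "2 * t * (a * b) \<le> t\<^sup>2 * a\<^sup>2 + b\<^sup>2" by (simp add: power2_eq_square algebra_simps)
  thus ?thesis using t by (simp add: field_simps power2_eq_square)
qed

context finite_group
begin

lemma sum_Irr_norm_sq:
  assumes h: "h \<in> carrier G"
  shows "(\<Sum>\<chi>\<in>Irr G. (cmod (\<chi> h))\<^sup>2) = real (card (carrier G)) / real (card (conj_class G h))"
proof -
  have "complex_of_real (\<Sum>\<chi>\<in>Irr G. (cmod (\<chi> h))\<^sup>2) = (\<Sum>\<chi>\<in>Irr G. cnj (\<chi> h) * \<chi> h)"
    unfolding of_real_sum by (rule sum.cong[OF refl]) (metis complex_norm_square mult.commute)
  also have "\<dots> = complex_of_real (real (card (carrier G)) / real (card (conj_class G h)))"
    using column_orthogonality[OF h h] conj_class_self[OF h] by simp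
  finally show ?thesis by (metis of_real_eq_iff)
qed

lemma sum_Irr_degree_sq: "(\<Sum>\<chi>\<in>Irr G. (cmod (\<chi> \<one>))\<^sup>2) = real (card (carrier G))"
  using sum_Irr_norm_sq[OF one_closed] conj_class_one by simp

text \<open>AM-GM with weight \<open>1 / sqrt |h^G|\<close>, which balances the two sums of squares.\<close>

lemma sum_Irr_degree_mult_norm_le:
  assumes h: "h \<in> carrier G"
  shows "(\<Sum>\<chi>\<in>Irr G. cmod (\<chi> \<one>) * cmod (\<chi> h)) \<le> real (card (carrier G)) / sqrt (card (conj_class G h))"
proof -
  define s where "s = sqrt (card (conj_class G h))"
  define t where "t = 1 / s"
  have s0: "s > 0" and ss: "s * s = card (conj_class G h)"
    unfolding s_def using card_conj_class_ge_1[OF h] by auto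
  have t0: "t > 0" unfolding t_def using s0 by simp
  have "(\<Sum>\<chi>\<in>Irr G. cmod (\<chi> \<one>) * cmod (\<chi> h))
      \<le> (\<Sum>\<chi>\<in>Irr G. (t * (cmod (\<chi> \<one>))\<^sup>2 + (cmod (\<chi> h))\<^sup>2 / t) / 2)"
    by (intro sum_mono mult_le_weighted_squares[OF t0])
  also have "\<dots> = (t * (\<Sum>\<chi>\<in>Irr G. (cmod (\<chi> \<one>))\<^sup>2) + (\<Sum>\<chi>\<in>Irr G. (cmod (\<chi> h))\<^sup>2) / t) / 2"
    by (simp only: sum_divide_distrib[symmetric] sum.distrib sum_distrib_left)
  also have "\<dots> = real (card (carrier G)) / s"
    unfolding sum_Irr_degree_sq sum_Irr_norm_sq[OF h] t_def using s0 ss[symmetric] by (simp add: field_simps)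
  finally show ?thesis unfolding s_def .
qed

lemma D_H_le_sum_conj_class:
  assumes H: "H \<subseteq> carrier G"
  shows "D_H G H \<le> (\<Sum>h\<in>H - {\<one>}. 1 / sqrt (real (card (conj_class G h))))"
proof -
  define S where "S = H - {\<one>}"
  have SG: "S \<subseteq> carrier G" using H unfolding S_def by auto
  have "(\<Sum>\<chi>\<in>Irr G. cmod (\<chi> \<one>) * cmod (\<Sum>h\<in>S. \<chi> h)) \<le> (\<Sum>\<chi>\<in>Irr G. cmod (\<chi> \<one>) * (\<Sum>h\<in>S. cmod (\<chi> h)))"
    by (intro sum_mono mult_left_mono norm_sum) auto
  also have "\<dots> = (\<Sum>h\<in>S. \<Sum>\<chi>\<in>Irr G. cmod (\<chi> \<one>) * cmod (\<chi> h))"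
    unfolding sum_distrib_left by (rule sum.swap)
  also have "\<dots> \<le> (\<Sum>h\<in>S. real (card (carrier G)) / sqrt (real (card (conj_class G h))))"
    using sum_Irr_degree_mult_norm_le SG by (intro sum_mono) auto
  finally have "1 / real (card (carrier G)) * (\<Sum>\<chi>\<in>Irr G. cmod (\<chi> \<one>) * cmod (\<Sum>h\<in>S. \<chi> h))
      \<le> 1 / real (card (carrier G)) * (\<Sum>h\<in>S. real (card (carrier G)) / sqrt (real (card (conj_class G h))))"
    by (rule mult_left_mono) auto
  thus ?thesis unfolding D_H_def S_def[symmetric] using card_carrier_pos by (simp add: sum_distrib_left)
qed

lemma sum_Irr_cnj_mult_sum:
  assumes S: "S \<subseteq> carrier G" and h0: "h0 \<in> carrier G"
  shows "(\<Sum>\<chi>\<in>Irr G. cnj (\<chi> h0) * (\<Sum>h\<in>S. \<chi> h)) =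
    of_real (card (S \<inter> conj_class G h0) * (card (carrier G) / card (conj_class G h0)))"
proof -
  have "(\<Sum>\<chi>\<in>Irr G. cnj (\<chi> h0) * (\<Sum>h\<in>S. \<chi> h)) = (\<Sum>h\<in>S. \<Sum>\<chi>\<in>Irr G. cnj (\<chi> h0) * \<chi> h)"
    unfolding sum_distrib_left by (rule sum.swap)
  also have "\<dots> = (\<Sum>h\<in>S. if h \<in> conj_class G h0 then of_nat (card (carrier G)) / of_nat (card (conj_class G h0)) else 0)"
    using column_orthogonality[OF h0] S by (intro sum.cong) auto
  also have "\<dots> = of_nat (card (S \<inter> conj_class G h0)) * (of_nat (card (carrier G)) / of_nat (card (conj_class G h0)))"
    using finite_subset[OF S finite_carrier] by (simp add: sum.If_cases)
  finally show ?thesis by simp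
qed

lemma D_H_ge_inverse_card_conj_class:
  assumes H: "H \<subseteq> carrier G" and h0: "h0 \<in> H" "h0 \<noteq> \<one>"
  shows "D_H G H \<ge> 1 / real (card (conj_class G h0))"
proof -
  define S where "S = H - {\<one>}"
  define K where "K = conj_class G h0"
  have h0G: "h0 \<in> carrier G" using H h0 by auto
  have SG: "S \<subseteq> carrier G" using H unfolding S_def by auto
  have "h0 \<in> S \<inter> K" unfolding S_def K_def using h0 conj_class_self[OF h0G] by auto
  hence "card (S \<inter> K) \<ge> 1"
    using finite_subset[OF SG finite_carrier] by (metis One_nat_def Suc_leI card_gt_0_iff empty_iff finite_Int)
  hence "1 * (real (card (carrier G)) / card K) \<le> card (S \<inter> K) * (real (card (carrier G)) / card K)"
    by (intro mult_right_mono) auto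
  also have "\<dots> = cmod (\<Sum>\<chi>\<in>Irr G. cnj (\<chi> h0) * (\<Sum>h\<in>S. \<chi> h))"
    unfolding sum_Irr_cnj_mult_sum[OF SG h0G] norm_of_real K_def by simp
  also have "\<dots> \<le> (\<Sum>\<chi>\<in>Irr G. cmod (cnj (\<chi> h0) * (\<Sum>h\<in>S. \<chi> h)))" by (rule norm_sum)
  also have "\<dots> \<le> (\<Sum>\<chi>\<in>Irr G. cmod (\<chi> \<one>) * cmod (\<Sum>h\<in>S. \<chi> h))"
    using Irr_norm_le_degree[OF _ h0G] by (intro sum_mono) (simp add: norm_mult mult_right_mono)
  finally have "1 / real (card (carrier G)) * (real (card (carrier G)) / card K)
      \<le> 1 / real (card (carrier G)) * (\<Sum>\<chi>\<in>Irr G. cmod (\<chi> \<one>) * cmod (\<Sum>h\<in>S. \<chi> h))"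
    by (intro mult_left_mono) auto
  thus ?thesis unfolding D_H_def S_def[symmetric] K_def using card_carrier_pos by simp
qed

lemma D_H_ge_powr_if_small_conj_class:
  assumes "H \<subseteq> carrier G" "h \<in> H" "h \<noteq> \<one>" and small: "real (card (conj_class G h)) \<le> L powr c"
  shows "D_H G H \<ge> L powr (- c)"
proof -
  have "real (card (conj_class G h)) \<ge> 1" using card_conj_class_ge_1[of h] assms(1,2) by auto
  hence "1 / L powr c \<le> 1 / real (card (conj_class G h))" by (intro frac_le) (use small in auto)
  hence "L powr (- c) \<le> 1 / real (card (conj_class G h))" by (simp add: powr_minus_divide)
  thus ?thesis using D_H_ge_inverse_card_conj_class[OF assms(1-3)] by linarith
qed

lemma D_H_less_if_conj_classes_large:
  assumes H: "H \<subseteq> carrier G" and L: "L > 0" and card_H: "real (card H) \<le> L powr c"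
    and large: "\<forall>h\<in>H - {\<one>}. real (card (conj_class G h)) > L powr (2 * (c + c''))"
  shows "D_H G H < L powr (- c'')"
proof (cases "H - {\<one>} = {}")
  case True
  hence "D_H G H \<le> 0" using D_H_le_sum_conj_class[OF H] by (simp only: sum.empty)
  moreover have "0 < L powr (- c'')" using L by simp
  ultimately show ?thesis by linarith
next
  case False
  have fin: "finite (H - {\<one>})" using finite_subset[OF H finite_carrier] by simp
  have "D_H G H < (\<Sum>h\<in>H - {\<one>}. L powr (- (c + c'')))"
  proof (rule order.strict_trans1[OF D_H_le_sum_conj_class[OF H] sum_strict_mono[OF fin False]])
    fix h assume "h \<in> H - {\<one>}"
    hence "sqrt (L powr (2 * (c + c''))) < sqrt (real (card (conj_class G h)))" using large by simp
    moreover have "L powr (c + c'') = sqrt (L powr (2 * (c + c'')))"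
    proof -
      have "L powr (c + c'') = L powr (2 * (c + c'') / 2)" by (simp add: add_divide_distrib)
      also have "\<dots> = sqrt (L powr (2 * (c + c'')))" by (rule powr_half_sqrt_powr) (use L in simp)
      finally show ?thesis .
    qed
    moreover have "0 < L powr (c + c'')" using L by simp
    ultimately have "1 / sqrt (real (card (conj_class G h))) < 1 / L powr (c + c'')"
      by (intro frac_less2) auto
    thus "1 / sqrt (real (card (conj_class G h))) < L powr (- (c + c''))"
      unfolding powr_minus_divide .
  qed
  also have "\<dots> \<le> real (card H) * L powr (- (c + c''))"
    using card_mono[OF finite_subset[OF H finite_carrier], of "H - {\<one>}"] by (simp add: mult_right_mono)
  also have "\<dots> \<le> L powr c * L powr (- (c + c''))" by (rule mult_right_mono[OF card_H]) simp
  also have "\<dots> = L powr (- c'')" using L by (simp add: powr_add[symmetric])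
  finally show ?thesis .
qed

lemma exists_small_conj_class_if_D_H_ge:
  assumes H: "H \<subseteq> carrier G" and L: "L > 0" and card_H: "real (card H) \<le> L powr c"
    and D: "D_H G H \<ge> L powr (- c'')"
  shows "\<exists>h\<in>H. h \<noteq> \<one> \<and> real (card (conj_class G h)) \<le> L powr (2 * (c + c''))"
proof (rule ccontr)
  assume "\<not> ?thesis"
  hence "D_H G H < L powr (- c'')" using D_H_less_if_conj_classes_large[OF H L card_H] by force
  thus False using D by simp
qed

lemma ln_card_carrier_pos:
  assumes "subgroup H G" and c: "c > 0" and card_H: "real (card H) \<le> ln (real (card (carrier G))) powr c"
  shows "ln (real (card (carrier G))) > 0"
proof -
  have "finite H" "\<one> \<in> H"
    using assms(1) finite_subset[OF subgroup.subset finite_carrier] subgroup.one_closed by blast+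
  hence "card H \<ge> 1" by (metis One_nat_def Suc_leI card_gt_0_iff empty_iff)
  hence "ln (real (card (carrier G))) \<noteq> 0" using card_H by auto
  moreover have "ln (real (card (carrier G))) \<ge> 0" using card_carrier_pos by simp
  ultimately show ?thesis by simp
qed

end

theorem theorem6:
  fixes I :: "nat set" and G :: "nat \<Rightarrow> ('a, 'b) monoid_scheme" and H :: "nat \<Rightarrow> 'a set"
    and c :: real
  assumes "infinite I" and "\<forall>i \<in> I. i > 0"
    and "\<forall>i \<in> I. group (G i) \<and> finite (carrier (G i)) \<and> subgroup (H i) (G i)"
    and "\<forall>M. \<exists>N. \<forall>i \<in> I. i \<ge> N \<longrightarrow> card (carrier (G i)) \<ge> M"
    and "c > 0"
    and "\<forall>i \<in> I. real (card (H i)) \<le> (ln (real (card (carrier (G i))))) powr c"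
  shows "distinguishable I G H \<longleftrightarrow>
    (\<exists>c'>0. \<exists>N. \<forall>i \<in> I. i \<ge> N \<longrightarrow>
       (\<exists>h \<in> H i. h \<noteq> \<one>\<^bsub>G i\<^esub> \<and>
          real (card (conj_class (G i) h)) \<le> (ln (real (card (carrier (G i))))) powr c'))"
proof -
  let ?L = "\<lambda>i. ln (real (card (carrier (G i))))"
  have G: "finite_group (G i)" and H: "H i \<subseteq> carrier (G i)" and L: "?L i > 0" if "i \<in> I" for i
  proof -
    show "finite_group (G i)" using assms(3) that by (simp add: finite_group_def finite_group_axioms_def)
    show "H i \<subseteq> carrier (G i)" using assms(3) that subgroup.subset by blast
    show "?L i > 0" using finite_group.ln_card_carrier_pos[OF \<open>finite_group (G i)\<close>] assms(3,5,6) that by blast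
  qed
  show ?thesis (is "?D \<longleftrightarrow> ?small")
  proof
    assume ?D
    then obtain c'' N where "c'' > 0" and "\<forall>i\<in>I. i \<ge> N \<longrightarrow> D_H (G i) (H i) \<ge> ?L i powr (- c'')"
      unfolding distinguishable_def by blast
    hence "\<forall>i\<in>I. i \<ge> N \<longrightarrow>
        (\<exists>h\<in>H i. h \<noteq> \<one>\<^bsub>G i\<^esub> \<and> real (card (conj_class (G i) h)) \<le> ?L i powr (2 * (c + c'')))"
      using finite_group.exists_small_conj_class_if_D_H_ge[OF G H L] assms(6) by blast
    moreover have "2 * (c + c'') > 0" using \<open>c'' > 0\<close> assms(5) by simp
    ultimately show ?small by blast
  next
    assume ?small
    then obtain c' N where "c' > 0" and "\<forall>i\<in>I. i \<ge> N \<longrightarrow>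
        (\<exists>h\<in>H i. h \<noteq> \<one>\<^bsub>G i\<^esub> \<and> real (card (conj_class (G i) h)) \<le> ?L i powr c')"
      by blast
    hence "\<forall>i\<in>I. i \<ge> N \<longrightarrow> D_H (G i) (H i) \<ge> ?L i powr (- c')"
      using finite_group.D_H_ge_powr_if_small_conj_class[OF G H] by blast
    thus ?D unfolding distinguishable_def using \<open>c' > 0\<close> by blast
  qed
qed

end
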